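(* Assume $m$ satisfies (H1) with index $n\in\mathbb{N}^\star$ and (H2a), and let $K$ be as in the context. Then there is $C>0$ such that $$|\nabla^lK(x)|\le C|x|^{-(l+1)}\big(m(|x|^{-1})+1\big)\quad\text{for all }x\in\mathbb{R}^2\setminus\{0\},\ l\in\{0,1,\dots,n+1\}.$$
   Context: $m:(0,\infty)\to\mathbb{R}$. (H1) with index $n$: $m\in C^{n+4}(\mathbb{R}_+)$; $m>0$, $m'\ge0$ on $(0,\infty)$; $\lim_{r\to0^+}rm'(r)$ exists; $|\frac{\mathrm d^k}{\mathrm dr^k}m'(r)|\le Cr^{-k}m'(r)$ for $k=1,\dots,n+3$, $r>0$. (H2a): with $\widetilde m(r)=m(e^r)$, there exist $\beta\in[0,+\infty]$, $\beta_1\in[0,\infty)$, $\beta_2\in(-2,\infty)$ with $\lim_{r\to\infty}m(r)=\infty$, $\lim\frac{r(\log r)\widetilde m'(r)}{\widetilde m(r)}=\beta$, $\lim\frac{r\widetilde m'(r)}{\widetilde m(r)}=\beta_1$, $\lim\frac{r\widetilde m''(r)}{\widetilde m'(r)}=\beta_2$ (as $r\to\infty$). $m(0^+)=\lim_{r\to0^+}m(r)$; $G(\rho)=\frac{1}{2\pi}m(0^+)+\frac{1}{2\pi}\int_0^\infty J_0(\rho r)m'(r)\,\mathrm dr$ with $J_0$ the zero-order Bessel function; $K(x)=\frac{x^\perp}{|x|^2}G(|x|)$ with $x^\perp=(x_2,-x_1)$. *)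

theory Defs
  imports "HOL-Analysis.Analysis"
begin

definition bessel_J0 :: "real \<Rightarrow> real" where
  "bessel_J0 x = (\<Sum>k. (-1) ^ k / (fact k)^2 * (x / 2) ^ (2 * k))"

definition H1 :: "nat \<Rightarrow> (real \<Rightarrow> real) \<Rightarrow> bool" where
  "H1 n m \<longleftrightarrow>
     (\<forall>k < n + 4. \<forall>r > 0. ((deriv ^^ k) m has_real_derivative (deriv ^^ Suc k) m r) (at r)) \<and>
     continuous_on {0<..} ((deriv ^^ (n + 4)) m) \<and>
     (\<forall>r > 0. m r > 0 \<and> deriv m r \<ge> 0) \<and>
     (\<exists>L. ((\<lambda>r. r * deriv m r) \<longlongrightarrow> L) (at_right 0)) \<and>
     (\<exists>C. \<forall>k \<in> {1..n+3}. \<forall>r > 0.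
        \<bar>(deriv ^^ k) (deriv m) r\<bar> \<le> C * r powr (- real k) * deriv m r)"

definition H2a :: "(real \<Rightarrow> real) \<Rightarrow> bool" where
  "H2a m \<longleftrightarrow>
     (let mt = (\<lambda>s. m (exp s)) in
      filterlim m at_top at_top \<and>
      (\<exists>\<beta>::ereal. \<beta> \<ge> 0 \<and>
         ((\<lambda>r. ereal (r * ln r * deriv mt r / mt r)) \<longlongrightarrow> \<beta>) at_top) \<and>
      (\<exists>\<beta>1::real. \<beta>1 \<ge> 0 \<and> ((\<lambda>r. r * deriv mt r / mt r) \<longlongrightarrow> \<beta>1) at_top) \<and>
      (\<exists>\<beta>2::real. \<beta>2 > -2 \<and>
         ((\<lambda>r. r * deriv (deriv mt) r / deriv mt r) \<longlongrightarrow> \<beta>2) at_top))"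

definition m0plus :: "(real \<Rightarrow> real) \<Rightarrow> real" where
  "m0plus m = Lim (at_right 0) m"

definition Gfun :: "(real \<Rightarrow> real) \<Rightarrow> real \<Rightarrow> real" where
  "Gfun m \<rho> = m0plus m / (2 * pi)
      + (1 / (2 * pi)) * integral {0<..} (\<lambda>r. bessel_J0 (\<rho> * r) * deriv m r)"

definition perp :: "real^2 \<Rightarrow> real^2" where
  "perp x = (\<chi> i. if i = 1 then x $ 2 else - (x $ 1))"

definition Kker :: "(real \<Rightarrow> real) \<Rightarrow> real^2 \<Rightarrow> real^2" where
  "Kker m x = (Gfun m (norm x) / (norm x)^2) *\<^sub>R perp x"

fun pd :: "2 list \<Rightarrow> (real^2 \<Rightarrow> real^2) \<Rightarrow> real^2 \<Rightarrow> real^2" where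
  "pd [] F = F"
| "pd (i # is) F = (\<lambda>x. frechet_derivative (pd is F) (at x) (axis i 1))"

end

theory Submission
  imports Defs
begin

(* Write T psi (rho) = int_0^oo J0(rho r) psi(r) dr, so that G = m(0+)/(2 pi) + T m' / (2 pi).
   The heart of the proof is that T m' is a symbol of order 0 for the weight w(rho) = m(1/rho) + 1:
   all its Euler derivatives (rho d/drho)^k T m', k <= n + 1, are O(w).

   Two facts give this. First, rho d/drho T psi = - T (psi + r psi'), by an integration by parts in r
   (rho d/drho J0(rho r) = r d/dr J0(rho r)); by (H1) the Euler derivatives of m' are O(m'), so
   derivatives of T m' are again transforms of functions that are O(m'). Second,
   |T psi (rho)| <= C w(rho) whenever psi and r psi' are O(m'): split the integral at r = 1/rho.
   The near part is O(int_0^(1/rho) m') = O(m(1/rho)). On the far part integrate by parts once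
   more, using (x J1)' = x J0 and |J0|, |J1| <= 2 min(1, x^(-1/2)) (a Lyapunov argument for
   J0^2 + J1^2); by (H2a) m(r) + 1 grows at most like r^(1/4), which makes the remaining integral
   converge with the right bound.

   Finally K(x) = (G(|x|) / |x|^2) x^perp, and a derivative of a(|x|) x1^i x2^j v, where a is a
   symbol of order s - i - j, is a sum of terms of the same kind of order s - 1. Hence each
   derivative of order l of K is O(|x|^(-1-l) w(|x|)). *)

section \<open>The Bessel functions \<open>J\<^sub>0\<close> and \<open>J\<^sub>1\<close>\<close>

definition bessel_coeff0 :: "nat \<Rightarrow> real" where
  "bessel_coeff0 k = (-1)^k / (fact k)^2"

definition bessel_coeff1 :: "nat \<Rightarrow> real" where
  "bessel_coeff1 k = (-1)^k / (fact k * fact (Suc k))"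

definition bessel_coeff1_shifted :: "nat \<Rightarrow> real" where
  "bessel_coeff1_shifted k = (if k = 0 then 0 else bessel_coeff1 (k - 1))"

definition bessel_F0 :: "real \<Rightarrow> real" where
  "bessel_F0 y = (\<Sum>k. bessel_coeff0 k * y^k)"

definition bessel_F1 :: "real \<Rightarrow> real" where
  "bessel_F1 y = (\<Sum>k. bessel_coeff1 k * y^k)"

definition bessel_J1 :: "real \<Rightarrow> real" where
  "bessel_J1 x = x / 2 * bessel_F1 (x^2 / 4)"

lemma summable_powser_if_coeff_le_inverse_fact:
  assumes "\<And>k. \<bar>c k\<bar> \<le> 1 / fact k"
  shows "summable (\<lambda>k. c k * (y::real)^k)"
proof (rule summable_comparison_test[OF _ summable_exp[of "\<bar>y\<bar>"]])
  show "\<exists>N. \<forall>n\<ge>N. norm (c n * y ^ n) \<le> inverse (fact n) * \<bar>y\<bar> ^ n"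
    using assms by (auto simp: abs_mult power_abs divide_inverse intro!: mult_right_mono)
qed

lemma abs_bessel_coeff0_le: "\<bar>bessel_coeff0 k\<bar> \<le> 1 / fact k"
proof -
  have "\<bar>bessel_coeff0 k\<bar> = 1 / (fact k)^2" by (simp add: bessel_coeff0_def abs_div power_abs)
  also have "\<dots> \<le> 1 / fact k" by (intro divide_left_mono) (auto simp: power2_eq_square)
  finally show ?thesis .
qed

lemma abs_bessel_coeff1_le: "\<bar>bessel_coeff1 k\<bar> \<le> 1 / fact k"
proof -
  have "(fact k :: real) \<le> fact k * fact (Suc k)"
    using fact_ge_1[of "Suc k", where 'a=real] fact_gt_zero[of k, where 'a=real]
    by (simp only: mult_le_cancel_left1) auto
  hence "1 / (fact k * fact (Suc k)) \<le> 1 / (fact k :: real)"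
    by (intro divide_left_mono) auto
  thus ?thesis by (simp add: bessel_coeff1_def abs_div power_abs)
qed

lemma abs_bessel_coeff1_shifted_le: "\<bar>bessel_coeff1_shifted k\<bar> \<le> 1 / fact k"
proof (cases k)
  case (Suc j)
  have "\<bar>bessel_coeff1_shifted k\<bar> = 1 / fact k * (1 / fact j)"
    using Suc by (simp add: bessel_coeff1_shifted_def bessel_coeff1_def abs_div power_abs field_simps)
  also have "\<dots> \<le> 1 / fact k" by (auto simp: fact_ge_1 divide_le_eq)
  finally show ?thesis .
qed (simp add: bessel_coeff1_shifted_def)

lemma diffs_bessel_coeff0: "diffs bessel_coeff0 = (\<lambda>k. - bessel_coeff1 k)"
proof
  fix k
  have "diffs bessel_coeff0 k = real (Suc k) * ((-1)^Suc k / (fact (Suc k))^2)"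
    by (simp add: diffs_def bessel_coeff0_def)
  also have "\<dots> = - bessel_coeff1 k" unfolding bessel_coeff1_def
    by (simp add: power2_eq_square field_simps del: of_nat_Suc)
  finally show "diffs bessel_coeff0 k = - bessel_coeff1 k" .
qed

lemma diffs_bessel_coeff1_shifted: "diffs bessel_coeff1_shifted = bessel_coeff0"
  by (rule ext) (simp add: diffs_def bessel_coeff1_shifted_def bessel_coeff1_def bessel_coeff0_def
      power2_eq_square field_simps del: of_nat_Suc)

lemma has_real_derivative_bessel_F0: "(bessel_F0 has_real_derivative - bessel_F1 y) (at y)"
proof -
  have "((\<lambda>x. \<Sum>k. bessel_coeff0 k * x^k) has_field_derivative (\<Sum>k. diffs bessel_coeff0 k * y^k)) (at y)"
    by (intro termdiffs_strong_converges_everywhere summable_powser_if_coeff_le_inverse_fact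
        abs_bessel_coeff0_le)
  moreover have "(\<Sum>k. diffs bessel_coeff0 k * y^k) = - bessel_F1 y"
    using suminf_minus[OF summable_powser_if_coeff_le_inverse_fact[OF abs_bessel_coeff1_le, of y]]
    by (simp add: diffs_bessel_coeff0 bessel_F1_def)
  ultimately show ?thesis unfolding bessel_F0_def by simp
qed

lemma bessel_coeff1_shifted_powser: "(\<Sum>k. bessel_coeff1_shifted k * y^k) = y * bessel_F1 y"
proof -
  have "(\<lambda>k. bessel_coeff1_shifted (Suc k) * y^Suc k) sums (y * bessel_F1 y)"
    unfolding bessel_F1_def
    using sums_mult[OF summable_sums[OF summable_powser_if_coeff_le_inverse_fact[OF abs_bessel_coeff1_le]], of y]
    by (simp add: bessel_coeff1_shifted_def mult_ac)
  hence "(\<lambda>k. bessel_coeff1_shifted k * y^k) sums (y * bessel_F1 y)"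
    using sums_Suc_iff[of "\<lambda>k. bessel_coeff1_shifted k * y^k"] by (simp add: bessel_coeff1_shifted_def)
  thus ?thesis by (simp add: sums_iff)
qed

lemma has_real_derivative_times_bessel_F1: "((\<lambda>y. y * bessel_F1 y) has_real_derivative bessel_F0 y) (at y)"
proof -
  have "((\<lambda>x. \<Sum>k. bessel_coeff1_shifted k * x^k) has_field_derivative
          (\<Sum>k. diffs bessel_coeff1_shifted k * y^k)) (at y)"
    by (intro termdiffs_strong_converges_everywhere summable_powser_if_coeff_le_inverse_fact
        abs_bessel_coeff1_shifted_le)
  thus ?thesis unfolding diffs_bessel_coeff1_shifted bessel_coeff1_shifted_powser bessel_F0_def by simp
qed

lemma bessel_F1_differentiable: "\<exists>D. (bessel_F1 has_real_derivative D) (at y)"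
  using termdiffs_strong_converges_everywhere[OF summable_powser_if_coeff_le_inverse_fact[OF abs_bessel_coeff1_le]]
  unfolding bessel_F1_def by blast

lemma bessel_J0_eq_F0: "bessel_J0 x = bessel_F0 (x^2 / 4)"
  unfolding bessel_J0_def bessel_F0_def bessel_coeff0_def by (simp add: power_mult power_divide)

lemma has_real_derivative_bessel_J0: "(bessel_J0 has_real_derivative - bessel_J1 x) (at x)"
proof -
  have "((\<lambda>x. bessel_F0 (x^2 / 4)) has_real_derivative (- bessel_F1 (x^2 / 4)) * (2 * x / 4)) (at x)"
    by (rule DERIV_chain2[OF has_real_derivative_bessel_F0]) (auto intro!: derivative_eq_intros)
  thus ?thesis unfolding bessel_J0_eq_F0[abs_def] bessel_J1_def by (simp add: field_simps)
qed

lemma has_real_derivative_times_bessel_J1: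
  "((\<lambda>x. x * bessel_J1 x) has_real_derivative x * bessel_J0 x) (at x)"
proof -
  have "((\<lambda>x. 2 * ((\<lambda>y. y * bessel_F1 y) (x^2 / 4))) has_real_derivative
          2 * (bessel_F0 (x^2 / 4) * (2 * x / 4))) (at x)"
    by (intro DERIV_cmult DERIV_chain2[OF has_real_derivative_times_bessel_F1])
       (auto intro!: derivative_eq_intros)
  moreover have "(\<lambda>x. x * bessel_J1 x) = (\<lambda>x. 2 * ((\<lambda>y. y * bessel_F1 y) (x^2 / 4)))"
    by (auto simp: bessel_J1_def power2_eq_square)
  ultimately show ?thesis unfolding bessel_J0_eq_F0 by (simp add: field_simps)
qed

lemma bessel_J1_differentiable: "\<exists>D. (bessel_J1 has_real_derivative D) (at x)"
proof -
  obtain D where "(bessel_F1 has_real_derivative D) (at (x^2 / 4))" using bessel_F1_differentiable by blast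
  hence "((\<lambda>x. bessel_F1 (x^2 / 4)) has_real_derivative D * (2 * x / 4)) (at x)"
    by (rule DERIV_chain2) (auto intro!: derivative_eq_intros)
  hence "((\<lambda>x. x / 2 * bessel_F1 (x^2 / 4)) has_real_derivative
           1 / 2 * bessel_F1 (x^2 / 4) + x / 2 * (D * (2 * x / 4))) (at x)"
    by (auto intro!: derivative_eq_intros)
  thus ?thesis unfolding bessel_J1_def[abs_def] by blast
qed

lemma has_real_derivative_bessel_J1:
  assumes "x \<noteq> 0"
  shows "(bessel_J1 has_real_derivative bessel_J0 x - bessel_J1 x / x) (at x)"
proof -
  obtain D where D: "(bessel_J1 has_real_derivative D) (at x)" using bessel_J1_differentiable by blast
  have "((\<lambda>x. x * bessel_J1 x) has_real_derivative 1 * bessel_J1 x + x * D) (at x)"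
    using D by (auto intro!: derivative_eq_intros)
  hence "1 * bessel_J1 x + x * D = x * bessel_J0 x"
    using has_real_derivative_times_bessel_J1 DERIV_unique by blast
  hence "D = bessel_J0 x - bessel_J1 x / x" using assms by (simp add: field_simps)
  with D show ?thesis by simp
qed

lemma bessel_J0_0 [simp]: "bessel_J0 0 = 1"
  unfolding bessel_J0_eq_F0 bessel_F0_def using powser_zero[of bessel_coeff0]
  by (simp add: bessel_coeff0_def)

lemma bessel_J1_0 [simp]: "bessel_J1 0 = 0"
  by (simp add: bessel_J1_def)

lemma isCont_bessel_J0: "isCont bessel_J0 x"
  using has_real_derivative_bessel_J0 DERIV_isCont by blast

lemma isCont_bessel_J1: "isCont bessel_J1 x"
  using bessel_J1_differentiable DERIV_isCont by blast

lemma continuous_on_bessel_J0 [continuous_intros]: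
  "continuous_on S f \<Longrightarrow> continuous_on S (\<lambda>x. bessel_J0 (f x))"
  by (rule continuous_on_compose2[of UNIV]) (auto intro: continuous_at_imp_continuous_on isCont_bessel_J0)

lemma continuous_on_bessel_J1 [continuous_intros]:
  "continuous_on S f \<Longrightarrow> continuous_on S (\<lambda>x. bessel_J1 (f x))"
  by (rule continuous_on_compose2[of UNIV]) (auto intro: continuous_at_imp_continuous_on isCont_bessel_J1)

lemma bessel_energy_le_1:
  assumes "x \<ge> 0"
  shows "(bessel_J0 x)^2 + (bessel_J1 x)^2 \<le> 1"
proof -
  let ?E = "\<lambda>x. (bessel_J0 x)^2 + (bessel_J1 x)^2"
  have "?E x \<le> ?E 0"
  proof (rule DERIV_nonpos_imp_nonincreasing[OF assms])
    fix t :: real assume t: "0 \<le> t"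
    show "\<exists>y. DERIV ?E t :> y \<and> y \<le> 0"
    proof (cases "t = 0")
      case True
      obtain D where "(bessel_J1 has_real_derivative D) (at 0)" using bessel_J1_differentiable by blast
      hence "DERIV ?E 0 :> 2 * bessel_J0 0 * (- bessel_J1 0) + 2 * bessel_J1 0 * D"
        using has_real_derivative_bessel_J0[of 0]
        by (auto intro!: derivative_eq_intros simp: power2_eq_square)
      thus ?thesis using True by auto
    next
      case False
      with t have "DERIV ?E t :> 2 * bessel_J0 t * (- bessel_J1 t) + 2 * bessel_J1 t * (bessel_J0 t - bessel_J1 t / t)"
        using has_real_derivative_bessel_J0[of t] has_real_derivative_bessel_J1[of t]
        by (auto intro!: derivative_eq_intros simp: power2_eq_square)
      moreover have "2 * bessel_J0 t * (- bessel_J1 t) + 2 * bessel_J1 t * (bessel_J0 t - bessel_J1 t / t) \<le> 0"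
        using t False by (simp add: field_simps)
      ultimately show ?thesis by blast
    qed
  qed
  thus ?thesis by simp
qed

lemma abs_bessel_J0_le_1:
  assumes "x \<ge> 0"
  shows "\<bar>bessel_J0 x\<bar> \<le> 1"
proof -
  have "(bessel_J0 x)^2 \<le> 1"
    using bessel_energy_le_1[OF assms] zero_le_power2[of "bessel_J1 x"] by linarith
  thus ?thesis using abs_le_square_iff[of "bessel_J0 x" 1] by simp
qed

lemma abs_bessel_J1_le_1:
  assumes "x \<ge> 0"
  shows "\<bar>bessel_J1 x\<bar> \<le> 1"
proof -
  have "(bessel_J1 x)^2 \<le> 1"
    using bessel_energy_le_1[OF assms] zero_le_power2[of "bessel_J0 x"] by linarith
  thus ?thesis using abs_le_square_iff[of "bessel_J1 x" 1] by simp
qed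

lemma bessel_energy_decay:
  assumes "x \<ge> 1"
  shows "(bessel_J0 x)^2 + (bessel_J1 x)^2 \<le> 4 / x"
proof -
  define E where "E t = (bessel_J0 t)^2 + (bessel_J1 t)^2" for t
  \<comment> \<open>A Lyapunov function: it decreases on \<open>(0, \<infinity>)\<close> and dominates \<open>(t - 1/2) E t\<close>.\<close>
  define H where "H t = t * E t + (bessel_J0 t)^2 / (2 * t) - bessel_J0 t * bessel_J1 t" for t
  have cross: "\<bar>bessel_J0 t * bessel_J1 t\<bar> \<le> E t / 2" for t
    using sum_squares_bound[of "bessel_J0 t" "bessel_J1 t"] sum_squares_bound[of "- bessel_J0 t" "bessel_J1 t"]
    by (simp add: E_def abs_le_iff)
  have "H x \<le> H 1"
  proof (rule DERIV_nonpos_imp_nonincreasing[OF assms])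
    fix t :: real assume "1 \<le> t"
    hence t: "t > 0" by simp
    have "(H has_real_derivative - ((bessel_J0 t)^2 / (2 * t^2))) (at t)"
      unfolding H_def[abs_def] E_def
      by (rule DERIV_cong, use has_real_derivative_bessel_J0[of t] has_real_derivative_bessel_J1[of t] t
          in \<open>auto intro!: derivative_eq_intros\<close>) (use t in \<open>simp add: field_simps power2_eq_square\<close>)
    thus "\<exists>y. DERIV H t :> y \<and> y \<le> 0" by (intro exI conjI) auto
  qed
  moreover have "H 1 \<le> 2"
  proof -
    have "H 1 = 3/2 * (bessel_J0 1)^2 + (bessel_J1 1)^2 - bessel_J0 1 * bessel_J1 1"
      by (simp add: H_def E_def)
    thus ?thesis using bessel_energy_le_1[OF zero_le_one] cross[of 1] zero_le_power2[of "bessel_J1 1"]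
      unfolding E_def abs_le_iff by argo
  qed
  moreover have "(x - 1/2) * E x \<le> H x"
  proof -
    have "0 \<le> (bessel_J0 x)^2 / (2 * x)" using assms by simp
    thus ?thesis using cross[of x] unfolding H_def abs_le_iff by (simp add: algebra_simps)
  qed
  moreover have "x / 2 * E x \<le> (x - 1/2) * E x"
    using assms by (intro mult_right_mono) (auto simp: E_def)
  ultimately have "x * E x \<le> 4" by linarith
  thus ?thesis using assms by (simp add: E_def field_simps)
qed

definition bessel_env :: "real \<Rightarrow> real" where
  "bessel_env x = min 1 (1 / sqrt x)"

lemma bessel_env_pos: "x > 0 \<Longrightarrow> bessel_env x > 0"
  by (simp add: bessel_env_def)

lemma bessel_env_le_1: "bessel_env x \<le> 1"
  by (simp add: bessel_env_def)

lemma bessel_env_le_inverse_sqrt: "bessel_env x \<le> 1 / sqrt x"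
  by (simp add: bessel_env_def)

lemma bessel_env_antimono: "0 < x \<Longrightarrow> x \<le> y \<Longrightarrow> bessel_env y \<le> bessel_env x"
  unfolding bessel_env_def using divide_left_mono[of "sqrt x" "sqrt y" 1] by fastforce

lemma isCont_bessel_env: "x > 0 \<Longrightarrow> isCont bessel_env x"
  unfolding bessel_env_def[abs_def] by (auto intro!: continuous_intros)

lemma abs_le_bessel_env:
  assumes "x > 0" and "\<bar>a\<bar> \<le> 1" and "x \<ge> 1 \<Longrightarrow> a^2 \<le> 4 / x"
  shows "\<bar>a\<bar> \<le> 2 * bessel_env x"
proof (cases "x \<ge> 1")
  case True
  have "\<bar>a\<bar> \<le> sqrt (4 / x)" using assms(3)[OF True] real_sqrt_le_mono by fastforce
  also have "\<dots> = 2 * (1 / sqrt x)" by (simp add: real_sqrt_divide)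
  also have "1 / sqrt x = bessel_env x" using True by (simp add: bessel_env_def min_absorb2)
  finally show ?thesis .
qed (use assms in \<open>simp add: bessel_env_def min_def\<close>)

lemma abs_bessel_J0_le_env: "x > 0 \<Longrightarrow> \<bar>bessel_J0 x\<bar> \<le> 2 * bessel_env x"
  using abs_bessel_J0_le_1[of x] bessel_energy_decay[of x] zero_le_power2[of "bessel_J1 x"]
  by (intro abs_le_bessel_env) linarith+

lemma abs_bessel_J1_le_env: "x > 0 \<Longrightarrow> \<bar>bessel_J1 x\<bar> \<le> 2 * bessel_env x"
  using abs_bessel_J1_le_1[of x] bessel_energy_decay[of x] zero_le_power2[of "bessel_J0 x"]
  by (intro abs_le_bessel_env) linarith+

lemma set_borel_measurable_continuous_on:
  fixes f :: "real \<Rightarrow> real"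
  shows "S \<in> sets borel \<Longrightarrow> continuous_on S f \<Longrightarrow> set_borel_measurable lborel S f"
  unfolding set_borel_measurable_def using borel_measurable_continuous_on_indicator[of S f] by simp

lemma set_integrable_bound_continuous_on:
  fixes f g :: "real \<Rightarrow> real"
  assumes "set_integrable lborel S g" "S \<in> sets borel" "continuous_on S f"
    and "\<And>x. x \<in> S \<Longrightarrow> \<bar>f x\<bar> \<le> g x"
  shows "set_integrable lborel S f"
proof (rule set_integrable_bound[OF assms(1) set_borel_measurable_continuous_on[OF assms(2,3)]])
  show "AE x in lborel. x \<in> S \<longrightarrow> norm (f x) \<le> norm (g x)"
    using assms(4) by (auto intro!: AE_I2 simp: abs_le_iff) (smt (verit) assms(4))+
qed

lemma set_integral_Ioi_FTC:
  fixes f F :: "real \<Rightarrow> real"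
  assumes "\<And>x. x > a \<Longrightarrow> (F has_real_derivative f x) (at x)"
    and "\<And>x. x > a \<Longrightarrow> isCont f x"
    and "set_integrable lborel {a<..} f"
    and "(F \<longlongrightarrow> FA) (at_right a)" and "(F \<longlongrightarrow> FB) at_top"
  shows "(LINT x:{a<..}|lborel. f x) = FB - FA"
proof -
  have "(LBINT x=ereal a..\<infinity>. f x) = FB - FA"
    by (rule interval_integral_FTC_integrable)
       (use assms in \<open>auto simp: ereal_tendsto_simps1 has_real_derivative_iff_has_vector_derivative[symmetric]\<close>)
  thus ?thesis by (simp add: interval_integral_to_infinity_eq)
qed

lemma set_integral_Ioo_FTC_nonneg:
  fixes f F :: "real \<Rightarrow> real"
  assumes "a < b"
    and "\<And>x. a < x \<Longrightarrow> x < b \<Longrightarrow> (F has_real_derivative f x) (at x)"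
    and "\<And>x. a < x \<Longrightarrow> x < b \<Longrightarrow> isCont f x"
    and "\<And>x. a < x \<Longrightarrow> x < b \<Longrightarrow> f x \<ge> 0"
    and "(F \<longlongrightarrow> FA) (at_right a)" and "(F \<longlongrightarrow> FB) (at_left b)"
  shows "set_integrable lborel {a<..<b} f" "(LINT x:{a<..<b}|lborel. f x) = FB - FA"
proof -
  have "set_integrable lborel (einterval (ereal a) (ereal b)) f \<and> (LBINT x=ereal a..ereal b. f x) = FB - FA"
    by (intro conjI interval_integral_FTC_nonneg)
       (use assms in \<open>auto simp: ereal_tendsto_simps1 intro!: AE_I2\<close>)
  thus "set_integrable lborel {a<..<b} f" "(LINT x:{a<..<b}|lborel. f x) = FB - FA"
    using assms(1) by (simp_all add: interval_integral_Ioo)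
qed

lemma set_integral_Ioi_FTC_nonneg:
  fixes f F :: "real \<Rightarrow> real"
  assumes "\<And>x. a < x \<Longrightarrow> (F has_real_derivative f x) (at x)"
    and "\<And>x. a < x \<Longrightarrow> isCont f x"
    and "\<And>x. a < x \<Longrightarrow> f x \<ge> 0"
    and "(F \<longlongrightarrow> FA) (at_right a)" and "(F \<longlongrightarrow> FB) at_top"
  shows "set_integrable lborel {a<..} f" "(LINT x:{a<..}|lborel. f x) = FB - FA"
proof -
  have "set_integrable lborel (einterval (ereal a) \<infinity>) f \<and> (LBINT x=ereal a..\<infinity>. f x) = FB - FA"
    by (intro conjI interval_integral_FTC_nonneg)
       (use assms in \<open>auto simp: ereal_tendsto_simps1 intro!: AE_I2\<close>)
  thus "set_integrable lborel {a<..} f" "(LINT x:{a<..}|lborel. f x) = FB - FA"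
    by (simp_all add: interval_integral_to_infinity_eq)
qed

lemma set_integral_powr_Ioi:
  fixes R c :: real
  assumes "R > 0" "c > 1"
  shows "set_integrable lborel {R<..} (\<lambda>r. r powr (-c))"
    and "(LINT r:{R<..}|lborel. r powr (-c)) = R powr (1 - c) / (c - 1)"
proof -
  let ?F = "\<lambda>r. - (r powr (1 - c) / (c - 1))"
  have deriv: "(?F has_real_derivative r powr (-c)) (at r)" if "R < r" for r
  proof -
    have "r > 0" using that assms by linarith
    hence "(?F has_real_derivative - ((1 - c) * r powr (1 - c - 1) / (c - 1))) (at r)"
      using assms by (auto intro!: derivative_eq_intros)
    moreover have "- ((1 - c) * r powr (1 - c - 1) / (c - 1)) = r powr (-c)"
      using assms by (simp add: field_simps)
    ultimately show ?thesis by simp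
  qed
  have cont: "isCont (\<lambda>r. r powr (-c)) r" if "R < r" for r
    using that assms by (auto intro!: continuous_intros)
  have at_R: "(?F \<longlongrightarrow> ?F R) (at_right R)"
    using assms by (intro tendsto_intros) (auto intro!: tendsto_intros simp: tendsto_mono[OF at_le])
  have "((\<lambda>r. r powr (1 - c)) \<longlongrightarrow> 0) at_top"
    using assms by (intro tendsto_neg_powr filterlim_ident) auto
  hence at_top: "(?F \<longlongrightarrow> 0) at_top"
    using tendsto_minus[OF tendsto_divide_zero[of _ at_top "c - 1"]] by simp
  show "set_integrable lborel {R<..} (\<lambda>r. r powr (-c))"
    by (rule set_integral_Ioi_FTC_nonneg(1)[OF deriv cont _ at_R at_top]) auto
  have "(LINT r:{R<..}|lborel. r powr (-c)) = 0 - ?F R"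
    by (rule set_integral_Ioi_FTC_nonneg(2)[OF deriv cont _ at_R at_top]) auto
  thus "(LINT r:{R<..}|lborel. r powr (-c)) = R powr (1 - c) / (c - 1)" by simp
qed

section \<open>Functions with bounded Euler derivatives\<close>

text \<open>\<open>euler_bounded W N f\<close>: the Euler derivatives \<open>(r d/dr)\<^sup>j f\<close>, \<open>j \<le> N\<close>, are continuous
  and \<open>O(W)\<close> on \<open>(0, \<infinity>)\<close>.\<close>

fun euler_bounded :: "(real \<Rightarrow> real) \<Rightarrow> nat \<Rightarrow> (real \<Rightarrow> real) \<Rightarrow> bool" where
  "euler_bounded W 0 f \<longleftrightarrow> continuous_on {0<..} f \<and> (\<exists>C. \<forall>r>0. \<bar>f r\<bar> \<le> C * W r)"
| "euler_bounded W (Suc N) f \<longleftrightarrow> euler_bounded W 0 f \<and>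
     (\<exists>f'. (\<forall>r>0. (f has_real_derivative f' r) (at r)) \<and> euler_bounded W N (\<lambda>r. r * f' r))"

lemma euler_bounded_SucD: "euler_bounded W (Suc N) f \<Longrightarrow> euler_bounded W N f"
proof (induction N arbitrary: f)
  case (Suc N)
  then obtain f' where "\<forall>r>0. (f has_real_derivative f' r) (at r)"
    "euler_bounded W (Suc N) (\<lambda>r. r * f' r)" "euler_bounded W 0 f" by auto
  with Suc.IH show ?case by auto
qed simp

lemma euler_bounded_mono: "N \<le> N' \<Longrightarrow> euler_bounded W N' f \<Longrightarrow> euler_bounded W N f"
proof (induction N')
  case (Suc N')
  show ?case
  proof (cases "N = Suc N'")
    case False
    with Suc show ?thesis using euler_bounded_SucD by (simp add: le_Suc_eq)
  qed (use Suc in simp)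
qed simp

lemma euler_bounded_0D: "euler_bounded W N f \<Longrightarrow> euler_bounded W 0 f"
  using euler_bounded_mono[of 0 N] by simp

lemma euler_bounded_nonneg_constant:
  assumes "euler_bounded W N f" "\<And>r. r > 0 \<Longrightarrow> W r \<ge> 0"
  obtains C where "C \<ge> 0" "\<And>r. r > 0 \<Longrightarrow> \<bar>f r\<bar> \<le> C * W r"
proof -
  obtain C where C: "\<forall>r>0. \<bar>f r\<bar> \<le> C * W r" using euler_bounded_0D[OF assms(1)] by auto
  have "\<bar>f r\<bar> \<le> max C 0 * W r" if "r > 0" for r
  proof -
    have "\<bar>f r\<bar> \<le> C * W r" using C that by simp
    also have "\<dots> \<le> max C 0 * W r" using assms(2)[OF that] by (intro mult_right_mono) auto
    finally show ?thesis .
  qed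
  with that[of "max C 0"] show ?thesis by auto
qed

lemma euler_bounded_cong:
  assumes "euler_bounded W N f" "\<And>r. r > 0 \<Longrightarrow> W r = W' r" "\<And>r. r > 0 \<Longrightarrow> f r = g r"
  shows "euler_bounded W' N g"
  using assms(1,3)
proof (induction N arbitrary: f g)
  case 0
  then obtain C where cont: "continuous_on {0<..} f" and C: "\<forall>r>0. \<bar>f r\<bar> \<le> C * W r" by auto
  have "continuous_on {0<..} g"
    using cont 0(2) continuous_on_cong[of "{0<..}" "{0<..}" f g] by simp
  moreover have "\<bar>g r\<bar> \<le> C * W' r" if "r > 0" for r
    using C[rule_format, OF that] 0(2)[OF that] assms(2)[OF that] by simp
  ultimately show ?case by auto
next
  case (Suc N)
  from Suc.prems(1) obtain f' where f': "\<forall>r>0. (f has_real_derivative f' r) (at r)"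
    "euler_bounded W N (\<lambda>r. r * f' r)" by auto
  have "(g has_real_derivative f' r) (at r)" if "r > 0" for r
    by (rule has_field_derivative_transform_within_open[of f "f' r" r "{0<..}"])
       (use f'(1) Suc.prems(2) that in auto)
  moreover have "euler_bounded W' N (\<lambda>r. r * f' r)"
    using Suc.IH[OF f'(2)] by simp
  moreover have "euler_bounded W' 0 g"
    using euler_bounded_0D[OF Suc.IH[OF euler_bounded_SucD[OF Suc.prems(1)] Suc.prems(2)]] .
  ultimately show ?case by auto
qed

lemma euler_bounded_add:
  "euler_bounded W N f \<Longrightarrow> euler_bounded W N g \<Longrightarrow> euler_bounded W N (\<lambda>r. f r + g r)"
proof (induction N arbitrary: f g)
  case 0
  then obtain C D where "\<forall>r>0. \<bar>f r\<bar> \<le> C * W r" "\<forall>r>0. \<bar>g r\<bar> \<le> D * W r" by auto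
  hence "\<forall>r>0. \<bar>f r + g r\<bar> \<le> (C + D) * W r"
    by (auto simp: distrib_right intro: order_trans[OF abs_triangle_ineq add_mono])
  with 0 show ?case by (auto intro!: continuous_intros)
next
  case (Suc N)
  from Suc.prems obtain f' g' where
    "\<forall>r>0. (f has_real_derivative f' r) (at r)" "euler_bounded W N (\<lambda>r. r * f' r)"
    "\<forall>r>0. (g has_real_derivative g' r) (at r)" "euler_bounded W N (\<lambda>r. r * g' r)" by auto
  moreover have "euler_bounded W 0 (\<lambda>r. f r + g r)"
    using Suc.IH[OF euler_bounded_SucD euler_bounded_SucD, OF Suc.prems] by (rule euler_bounded_0D)
  ultimately show ?case
    using Suc.IH[of "\<lambda>r. r * f' r" "\<lambda>r. r * g' r"]
    by (auto intro!: exI[of _ "\<lambda>r. f' r + g' r"] derivative_eq_intros simp: distrib_left)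
qed

lemma euler_bounded_cmult: "euler_bounded W N f \<Longrightarrow> euler_bounded W N (\<lambda>r. c * f r)"
proof (induction N arbitrary: f)
  case 0
  then obtain C where "\<forall>r>0. \<bar>f r\<bar> \<le> C * W r" by auto
  hence "\<forall>r>0. \<bar>c * f r\<bar> \<le> (\<bar>c\<bar> * C) * W r"
    by (auto simp: abs_mult mult.assoc intro!: mult_left_mono)
  with 0 show ?case by (auto intro!: continuous_intros)
next
  case (Suc N)
  from Suc.prems obtain f' where
    "\<forall>r>0. (f has_real_derivative f' r) (at r)" "euler_bounded W N (\<lambda>r. r * f' r)" by auto
  moreover have "euler_bounded W 0 (\<lambda>r. c * f r)"
    using Suc.IH[OF euler_bounded_SucD, OF Suc.prems] by (rule euler_bounded_0D)
  ultimately show ?case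
    using Suc.IH[of "\<lambda>r. r * f' r"]
    by (auto intro!: exI[of _ "\<lambda>r. c * f' r"] derivative_eq_intros simp: mult_ac)
qed

lemma euler_bounded_zero: "euler_bounded W N (\<lambda>r. 0)"
  by (induction N) (auto intro!: exI[of _ 0] exI[of _ "\<lambda>_. 0"])

lemma euler_bounded_const:
  assumes "\<And>r. r > 0 \<Longrightarrow> W r \<ge> 1"
  shows "euler_bounded W N (\<lambda>r. c)"
proof -
  have "\<bar>c\<bar> \<le> \<bar>c\<bar> * W r" if "r > 0" for r
    using assms[OF that] mult_left_mono[of 1 "W r" "\<bar>c\<bar>"] by simp
  hence "euler_bounded W 0 (\<lambda>r. c)" by auto
  thus ?thesis using euler_bounded_zero[of W] by (cases N) (auto intro!: exI[of _ "\<lambda>_. 0"])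
qed

lemma euler_bounded_mult_powr:
  "euler_bounded W N f \<Longrightarrow> euler_bounded (\<lambda>r. r powr k * W r) N (\<lambda>r. r powr k * f r)"
proof (induction N arbitrary: f)
  case 0
  then obtain C where "\<forall>r>0. \<bar>f r\<bar> \<le> C * W r" by auto
  hence "\<forall>r>0. \<bar>r powr k * f r\<bar> \<le> C * (r powr k * W r)"
    by (auto simp: abs_mult mult.left_commute intro!: mult_left_mono)
  with 0 show ?case by (auto intro!: continuous_intros)
next
  case (Suc N)
  from Suc.prems obtain f' where f':
    "\<forall>r>0. (f has_real_derivative f' r) (at r)" "euler_bounded W N (\<lambda>r. r * f' r)" by auto
  have fN: "euler_bounded W N f" using Suc.prems by (rule euler_bounded_SucD)
  have "euler_bounded (\<lambda>r. r powr k * W r) N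
          (\<lambda>r. k * (r powr k * f r) + r powr k * (r * f' r))"
    by (intro euler_bounded_add euler_bounded_cmult Suc.IH fN f'(2))
  hence "euler_bounded (\<lambda>r. r powr k * W r) N (\<lambda>r. r * (k * r powr (k - 1) * f r + r powr k * f' r))"
    by (rule euler_bounded_cong) (auto simp: powr_diff algebra_simps)
  moreover have "\<forall>r>0. ((\<lambda>r. r powr k * f r) has_real_derivative k * r powr (k - 1) * f r + r powr k * f' r) (at r)"
    using f'(1) by (auto intro!: derivative_eq_intros)
  moreover have "euler_bounded (\<lambda>r. r powr k * W r) 0 (\<lambda>r. r powr k * f r)"
    using Suc.IH[OF fN] by (rule euler_bounded_0D)
  ultimately show ?case by auto
qed

section \<open>Tame profiles and their Bessel transform\<close>

text \<open>Any exponent below \<open>1/2\<close>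
  would do in place of \<open>1/4\<close>: together with \<open>|J(x)| \<lesssim> x\<^sup>-\<^sup>1\<^sup>/\<^sup>2\<close> it makes \<open>\<phi>(r) J(\<rho> r)\<close> integrable
  at infinity.\<close>

locale tame_profile =
  fixes m \<phi> :: "real \<Rightarrow> real" and m0 A B :: real
  assumes m_deriv: "\<And>r. r > 0 \<Longrightarrow> (m has_real_derivative \<phi> r) (at r)"
    and phi_cont: "continuous_on {0<..} \<phi>"
    and phi_nonneg: "\<And>r. r > 0 \<Longrightarrow> \<phi> r \<ge> 0"
    and m_pos: "\<And>r. r > 0 \<Longrightarrow> m r > 0"
    and m_lim: "(m \<longlongrightarrow> m0) (at_right 0)"
    and times_phi_lim: "((\<lambda>r. r * \<phi> r) \<longlongrightarrow> 0) (at_right 0)"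
    and times_phi_le: "\<And>r. r > 0 \<Longrightarrow> r * \<phi> r \<le> A * (m r + 1)"
    and m_growth: "\<And>R r. 0 < R \<Longrightarrow> R \<le> r \<Longrightarrow> m r + 1 \<le> B * (m R + 1) * (r / R) powr (1/4)"
begin

lemma isCont_m: "r > 0 \<Longrightarrow> isCont m r"
  using m_deriv DERIV_isCont by blast

lemma isCont_phi: "r > 0 \<Longrightarrow> isCont \<phi> r"
  using phi_cont continuous_on_eq_continuous_at[of "{0<..}" \<phi>] by auto

lemma m0_nonneg: "0 \<le> m0"
  by (rule tendsto_lowerbound[OF m_lim])
     (auto intro!: eventually_at_rightI[of 0 1] less_imp_le[OF m_pos])

lemma A_nonneg: "A \<ge> 0"
proof -
  have "0 \<le> A * (m 1 + 1)" using phi_nonneg[of 1] times_phi_le[of 1] by simp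
  thus ?thesis using m_pos[of 1] by (simp add: zero_le_mult_iff)
qed

lemma phi_le: "r > 0 \<Longrightarrow> \<phi> r \<le> A * (m r + 1) / r"
  using times_phi_le[of r] by (simp add: field_simps)

lemma set_integral_phi_Ioc:
  assumes "R > 0"
  shows "set_integrable lborel {0<..R} \<phi>" "(LINT r:{0<..R}|lborel. \<phi> r) = m R - m0"
proof -
  have at_R: "(m \<longlongrightarrow> m R) (at_left R)"
    using isCont_m[OF assms] by (simp add: isCont_def filterlim_at_split)
  note FTC = set_integral_Ioo_FTC_nonneg[OF assms _ _ _ m_lim at_R]
  have Ioo: "set_integrable lborel {0<..<R} \<phi>" "(LINT r:{0<..<R}|lborel. \<phi> r) = m R - m0"
    by (rule FTC; use m_deriv isCont_phi phi_nonneg in auto)+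
  have "({0<..R} - {0<..<R}) \<union> ({0<..<R} - {0<..R}) \<subseteq> {R}" by auto
  thus "set_integrable lborel {0<..R} \<phi>" "(LINT r:{0<..R}|lborel. \<phi> r) = m R - m0"
    using Ioo set_integrable_discrete_difference[where X="{R}" and M=lborel and f=\<phi>]
      set_integral_discrete_difference[where X="{R}" and M=lborel and f=\<phi>] by auto
qed

lemma phi_env_le_powr:
  assumes "\<rho> > 0" "1 / \<rho> \<le> r"
  shows "\<phi> r * bessel_env (\<rho> * r) \<le> A * B * (m (1 / \<rho>) + 1) * \<rho> powr (-1/4) * r powr (-5/4)"
proof -
  have r: "r > 0" using assms by (meson divide_pos_pos less_le_trans zero_less_one)
  have env: "bessel_env (\<rho> * r) \<le> (\<rho> * r) powr (-1/2)"
    using bessel_env_le_inverse_sqrt[of "\<rho> * r"] assms r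
    by (simp add: powr_minus_divide powr_half_sqrt[symmetric])
  have "\<phi> r \<le> A * (m r + 1) / r" by (rule phi_le[OF r])
  also have "\<dots> \<le> A * (B * (m (1 / \<rho>) + 1) * (r / (1 / \<rho>)) powr (1/4)) / r"
    using m_growth[of "1 / \<rho>" r] assms A_nonneg r by (intro divide_right_mono mult_left_mono) auto
  finally have "\<phi> r \<le> A * B * (m (1 / \<rho>) + 1) * ((\<rho> * r) powr (1/4) / r)"
    by (simp add: mult.commute mult.left_commute)
  hence "\<phi> r * bessel_env (\<rho> * r)
      \<le> A * B * (m (1 / \<rho>) + 1) * ((\<rho> * r) powr (1/4) / r) * (\<rho> * r) powr (-1/2)"
    using env phi_nonneg[OF r] bessel_env_pos[of "\<rho> * r"] assms r by (intro mult_mono) auto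
  also have "\<dots> = A * B * (m (1 / \<rho>) + 1) * ((\<rho> * r) powr (1/4) * (\<rho> * r) powr (-1/2) / r)"
    by simp
  also have "(\<rho> * r) powr (1/4) * (\<rho> * r) powr (-1/2) / r = \<rho> powr (-1/4) * r powr (-5/4)"
  proof -
    have "(\<rho> * r) powr (1/4) * (\<rho> * r) powr (-1/2) = (\<rho> * r) powr (-1/4)"
      by (subst powr_add[symmetric]) simp
    also have "\<dots> = \<rho> powr (-1/4) * r powr (-1/4)" by (rule powr_mult)
    moreover
    have "r powr (-1/4) / r = r powr (-5/4)"
      using r powr_diff[of r "-1/4" 1] by simp
    ultimately show ?thesis by (metis times_divide_eq_right)
  qed
  finally show ?thesis by (simp add: mult.assoc)
qed

lemma continuous_on_phi_env: "\<rho> > 0 \<Longrightarrow> continuous_on {0<..} (\<lambda>r. \<phi> r * bessel_env (\<rho> * r))"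
  by (intro continuous_on_mult phi_cont continuous_at_imp_continuous_on ballI)
     (auto intro!: continuous_intros isCont_o2[OF _ isCont_bessel_env])

lemma phi_env_tail:
  assumes "\<rho> > 0"
  shows "set_integrable lborel {1/\<rho><..} (\<lambda>r. \<phi> r * bessel_env (\<rho> * r))"
    and "(LINT r:{1/\<rho><..}|lborel. \<phi> r * bessel_env (\<rho> * r)) \<le> 4 * A * B * (m (1 / \<rho>) + 1)"
proof -
  let ?K = "A * B * (m (1 / \<rho>) + 1) * \<rho> powr (-1/4)"
  have R: "1 / \<rho> > 0" using assms by simp
  have powr_int: "set_integrable lborel {1/\<rho><..} (\<lambda>r. ?K * r powr (-(5/4)))"
    using set_integral_powr_Ioi(1)[OF R, of "5/4"] by (intro set_integrable_mult_right) simp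
  have pos: "r > 0" if "r \<in> {1/\<rho><..}" for r using that R by (metis greaterThan_iff less_trans)
  show int: "set_integrable lborel {1/\<rho><..} (\<lambda>r. \<phi> r * bessel_env (\<rho> * r))"
  proof (rule set_integrable_bound_continuous_on[OF powr_int _
        continuous_on_subset[OF continuous_on_phi_env[OF assms]]])
    fix r assume r: "r \<in> {1/\<rho><..}"
    have "0 \<le> \<phi> r * bessel_env (\<rho> * r)"
      using phi_nonneg bessel_env_pos[of "\<rho> * r"] pos[OF r] assms by simp
    thus "\<bar>\<phi> r * bessel_env (\<rho> * r)\<bar> \<le> ?K * r powr (-(5/4))"
      using phi_env_le_powr[OF assms, of r] r by simp
  qed (use pos assms in auto)
  have "(LINT r:{1/\<rho><..}|lborel. \<phi> r * bessel_env (\<rho> * r)) \<le> (LINT r:{1/\<rho><..}|lborel. ?K * r powr (-(5/4)))"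
    by (rule set_integral_mono[OF int powr_int]) (use assms phi_env_le_powr in auto)
  also have "\<dots> = ?K * ((1 / \<rho>) powr (1 - 5/4) / (5/4 - 1))"
    using set_integral_powr_Ioi(2)[OF R, of "5/4"] by simp
  also have "\<dots> = 4 * A * B * (m (1 / \<rho>) + 1) * (\<rho> powr (-1/4) * (1 / \<rho>) powr (1 - 5/4))"
    by simp
  also have "\<rho> powr (-1/4) * (1 / \<rho>) powr (1 - 5/4) = 1"
  proof -
    have "(1 / \<rho>) powr (1 - 5/4) = \<rho> powr (1/4)"
      using assms by (simp add: powr_divide powr_minus_divide)
    thus ?thesis using assms by (simp add: powr_add[symmetric])
  qed
  finally show "(LINT r:{1/\<rho><..}|lborel. \<phi> r * bessel_env (\<rho> * r)) \<le> 4 * A * B * (m (1 / \<rho>) + 1)"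
    by simp
qed

lemma set_integrable_phi_env:
  assumes "\<rho> > 0"
  shows "set_integrable lborel {0<..} (\<lambda>r. \<phi> r * bessel_env (\<rho> * r))"
proof -
  have R: "1 / \<rho> > 0" using assms by simp
  have head: "set_integrable lborel {0<..1/\<rho>} (\<lambda>r. \<phi> r * bessel_env (\<rho> * r))"
    by (rule set_integrable_bound_continuous_on[OF set_integral_phi_Ioc(1)[OF R] _
          continuous_on_subset[OF continuous_on_phi_env[OF assms]]])
       (use assms in \<open>auto simp: abs_mult bessel_env_le_1 phi_nonneg bessel_env_pos less_imp_le
          intro!: mult_left_le\<close>)
  show ?thesis
    using set_integrable_Un[OF head phi_env_tail(1)[OF assms]]
    unfolding ivl_disj_un_one(5)[OF less_imp_le[OF R]] by simp
qed

lemma phi_tendsto_0: "(\<phi> \<longlongrightarrow> 0) at_top"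
proof (rule Lim_null_comparison)
  let ?K = "A * B * (m 1 + 1)"
  show "\<forall>\<^sub>F r in at_top. norm (\<phi> r) \<le> ?K * r powr (-3/4)"
  proof (rule eventually_at_top_linorderI[of 1])
    fix r :: real assume r: "1 \<le> r"
    have "\<phi> r \<le> A * (B * (m 1 + 1) * r powr (1/4)) / r"
      using phi_le[of r] divide_right_mono[OF mult_left_mono[OF m_growth[of 1 r] A_nonneg], of r] r
      by simp
    also have "\<dots> = ?K * (r powr (1/4) / r)" by simp
    also have "r powr (1/4) / r = r powr (-3/4)" using r powr_diff[of r "1/4" 1] by simp
    finally show "norm (\<phi> r) \<le> ?K * r powr (-3/4)" using phi_nonneg[of r] r by simp
  qed
  have "((\<lambda>r::real. r powr (-(3/4))) \<longlongrightarrow> 0) at_top"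
    by (intro tendsto_neg_powr filterlim_ident) auto
  thus "((\<lambda>r. ?K * r powr (-3/4)) \<longlongrightarrow> 0) at_top"
    using tendsto_mult_right_zero by simp
qed

lemma times_phi_env_tendsto_0:
  assumes "c > 0"
  shows "((\<lambda>r. bessel_env (c * r) * (r * \<phi> r)) \<longlongrightarrow> 0) at_top"
proof (rule Lim_null_comparison)
  let ?K = "A * B * (m 1 + 1) / sqrt c"
  show "\<forall>\<^sub>F r in at_top. norm (bessel_env (c * r) * (r * \<phi> r)) \<le> ?K * r powr (-(1/4))"
  proof (rule eventually_at_top_linorderI[of 1])
    fix r :: real assume r1: "1 \<le> r"
    hence r: "r > 0" by simp
    have "r * \<phi> r \<le> A * B * (m 1 + 1) * r powr (1/4)"
        using times_phi_le[OF r] mult_left_mono[OF m_growth[of 1 r] A_nonneg] r1 by (simp add: mult.assoc)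
    hence "bessel_env (c * r) * (r * \<phi> r) \<le> (1 / sqrt (c * r)) * (A * B * (m 1 + 1) * r powr (1/4))"
      using phi_nonneg[OF r] r assms
      by (intro mult_mono[OF bessel_env_le_inverse_sqrt]) auto
    also have "\<dots> = ?K * (r powr (1/4) / sqrt r)" by (simp add: real_sqrt_mult)
    also have "r powr (1/4) / sqrt r = r powr (-(1/4))"
      using r powr_diff[of r "1/4" "1/2"] by (simp add: powr_half_sqrt)
    finally show "norm (bessel_env (c * r) * (r * \<phi> r)) \<le> ?K * r powr (-(1/4))"
      using bessel_env_pos[of "c * r"] phi_nonneg[OF r] r assms by simp
  qed
  have "((\<lambda>r::real. r powr (-(1/4))) \<longlongrightarrow> 0) at_top"
    by (intro tendsto_neg_powr filterlim_ident) auto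
  thus "((\<lambda>r. ?K * r powr (-(1/4))) \<longlongrightarrow> 0) at_top"
    using tendsto_mult_right_zero by blast
qed

lemma euler_bounded_phi_constant:
  assumes "euler_bounded \<phi> N \<psi>"
  obtains C where "C \<ge> 0" "\<And>r. r > 0 \<Longrightarrow> \<bar>\<psi> r\<bar> \<le> C * \<phi> r"
  using euler_bounded_nonneg_constant[OF assms phi_nonneg] by blast

lemma euler_bounded_phi_tendsto_0:
  assumes "euler_bounded \<phi> N \<psi>"
  shows "(\<psi> \<longlongrightarrow> 0) at_top"
proof -
  obtain C where C: "C \<ge> 0" "\<And>r. r > 0 \<Longrightarrow> \<bar>\<psi> r\<bar> \<le> C * \<phi> r"
    using euler_bounded_phi_constant[OF assms] by blast
  show ?thesis
    by (rule Lim_null_comparison[where g="\<lambda>r. C * \<phi> r"])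
       (use C tendsto_mult_right_zero[OF phi_tendsto_0] in \<open>auto intro: eventually_at_top_linorderI[of 1]\<close>)
qed

lemma euler_bounded_phi_times_tendsto_0:
  assumes "euler_bounded \<phi> N \<psi>"
  shows "((\<lambda>r. r * \<psi> r) \<longlongrightarrow> 0) (at_right 0)"
proof -
  obtain C where C: "C \<ge> 0" "\<And>r. r > 0 \<Longrightarrow> \<bar>\<psi> r\<bar> \<le> C * \<phi> r"
    using euler_bounded_phi_constant[OF assms] by blast
  have "norm (r * \<psi> r) \<le> C * (r * \<phi> r)" if "r > 0" for r
    using C(2)[OF that] that mult_left_mono[of "\<bar>\<psi> r\<bar>" "C * \<phi> r" r] by (simp add: abs_mult mult_ac)
  hence "\<forall>\<^sub>F r in at_right 0. norm (r * \<psi> r) \<le> C * (r * \<phi> r)"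
    by (intro eventually_at_rightI[of 0 1]) auto
  thus ?thesis by (rule Lim_null_comparison[OF _ tendsto_mult_right_zero[OF times_phi_lim]])
qed

end

definition bessel_transform :: "(real \<Rightarrow> real) \<Rightarrow> real \<Rightarrow> real" where
  "bessel_transform \<psi> \<rho> = (LINT r:{0<..}|lborel. bessel_J0 (\<rho> * r) * \<psi> r)"

lemma abs_bessel_J1_quotient_le:
  assumes "x \<ge> 1"
  shows "\<bar>bessel_J1 x * a / x\<bar> \<le> 2 * bessel_env x * \<bar>a\<bar>"
proof -
  have "\<bar>bessel_J1 x * a / x\<bar> \<le> \<bar>bessel_J1 x * a\<bar> / 1"
    using assms divide_left_mono[of 1 x "\<bar>bessel_J1 x * a\<bar>"] by simp
  also have "\<dots> \<le> 2 * bessel_env x * \<bar>a\<bar>"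
    using abs_bessel_J1_le_env[of x] assms by (simp add: abs_mult mult_right_mono)
  finally show ?thesis .
qed

lemma abs_bessel_J1_parts_le:
  assumes "\<rho> * r \<ge> 1" "\<bar>\<psi> r\<bar> \<le> C * w r" "\<bar>r * \<psi>' r\<bar> \<le> C' * w r"
  shows "\<bar>bessel_J1 (\<rho> * r) * (r * \<psi>' r - \<psi> r) / (\<rho> * r)\<bar> \<le> 2 * (C + C') * (w r * bessel_env (\<rho> * r))"
proof -
  have "\<bar>bessel_J1 (\<rho> * r) * (r * \<psi>' r - \<psi> r) / (\<rho> * r)\<bar>
      \<le> 2 * bessel_env (\<rho> * r) * \<bar>r * \<psi>' r - \<psi> r\<bar>"
    using assms(1) by (rule abs_bessel_J1_quotient_le)
  also have "\<dots> \<le> 2 * bessel_env (\<rho> * r) * ((C + C') * w r)"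
    using assms bessel_env_pos[of "\<rho> * r"]
    by (intro mult_left_mono) (auto simp: algebra_simps intro: order_trans[OF abs_triangle_ineq4])
  finally show ?thesis by (simp add: algebra_simps)
qed

lemma has_real_derivative_bessel_J1_times:
  assumes "(\<psi> has_real_derivative \<psi>' r) (at r)" "\<rho> > 0" "r > 0"
  shows "((\<lambda>r. bessel_J1 (\<rho> * r) * \<psi> r / \<rho>) has_real_derivative
    bessel_J0 (\<rho> * r) * \<psi> r + bessel_J1 (\<rho> * r) * (r * \<psi>' r - \<psi> r) / (\<rho> * r)) (at r)"
proof -
  have "((\<lambda>r. bessel_J1 (\<rho> * r) * \<psi> r / \<rho>) has_real_derivative
      ((bessel_J0 (\<rho> * r) - bessel_J1 (\<rho> * r) / (\<rho> * r)) * \<rho> * \<psi> r + bessel_J1 (\<rho> * r) * \<psi>' r) / \<rho>)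
      (at r)"
    using assms by (auto intro!: derivative_eq_intros DERIV_chain2[OF has_real_derivative_bessel_J1])
  moreover have "((bessel_J0 (\<rho> * r) - bessel_J1 (\<rho> * r) / (\<rho> * r)) * \<rho> * \<psi> r
      + bessel_J1 (\<rho> * r) * \<psi>' r) / \<rho>
      = bessel_J0 (\<rho> * r) * \<psi> r + bessel_J1 (\<rho> * r) * (r * \<psi>' r - \<psi> r) / (\<rho> * r)"
    using assms by (simp add: field_simps)
  ultimately show ?thesis by simp
qed

context tame_profile
begin


lemma set_integrable_bessel_J0_times:
  assumes "euler_bounded \<phi> N \<psi>" "\<rho> > 0"
  shows "set_integrable lborel {0<..} (\<lambda>r. bessel_J0 (\<rho> * r) * \<psi> r)"
proof -
  obtain C where C: "C \<ge> 0" "\<And>r. r > 0 \<Longrightarrow> \<bar>\<psi> r\<bar> \<le> C * \<phi> r"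
    using euler_bounded_phi_constant[OF assms(1)] by blast
  have cont: "continuous_on {0<..} \<psi>" using euler_bounded_0D[OF assms(1)] by simp
  show ?thesis
  proof (rule set_integrable_bound_continuous_on[OF
        set_integrable_mult_right[OF set_integrable_phi_env[OF assms(2)], of "2 * C"]])
    show "continuous_on {0<..} (\<lambda>r. bessel_J0 (\<rho> * r) * \<psi> r)"
      by (intro continuous_on_mult cont continuous_at_imp_continuous_on ballI)
         (auto intro!: isCont_o2[OF _ isCont_bessel_J0] continuous_intros)
    fix r :: real assume "r \<in> {0<..}"
    hence "\<bar>bessel_J0 (\<rho> * r) * \<psi> r\<bar> \<le> (2 * bessel_env (\<rho> * r)) * (C * \<phi> r)"
      unfolding abs_mult using assms abs_bessel_J0_le_env[of "\<rho> * r"] C bessel_env_pos[of "\<rho> * r"]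
      by (intro mult_mono) auto
    thus "\<bar>bessel_J0 (\<rho> * r) * \<psi> r\<bar> \<le> 2 * C * (\<phi> r * bessel_env (\<rho> * r))"
      by (simp add: mult_ac)
  qed simp
qed

lemma bessel_J1_parts_tail:
  assumes C: "C \<ge> 0" "\<And>r. r > 0 \<Longrightarrow> \<bar>\<psi> r\<bar> \<le> C * \<phi> r"
    and C': "C' \<ge> 0" "\<And>r. r > 0 \<Longrightarrow> \<bar>r * \<psi>' r\<bar> \<le> C' * \<phi> r"
    and cont: "continuous_on {0<..} \<psi>" "continuous_on {0<..} (\<lambda>r. r * \<psi>' r)" and \<rho>: "\<rho> > 0"
  shows "set_integrable lborel {1/\<rho><..} (\<lambda>r. bessel_J1 (\<rho> * r) * (r * \<psi>' r - \<psi> r) / (\<rho> * r))"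
    and "\<bar>LINT r:{1/\<rho><..}|lborel. bessel_J1 (\<rho> * r) * (r * \<psi>' r - \<psi> r) / (\<rho> * r)\<bar>
      \<le> 8 * (C + C') * A * B * (m (1 / \<rho>) + 1)"
proof -
  let ?g = "\<lambda>r. bessel_J1 (\<rho> * r) * (r * \<psi>' r - \<psi> r) / (\<rho> * r)"
  let ?h = "\<lambda>r. 2 * (C + C') * (\<phi> r * bessel_env (\<rho> * r))"
  have R: "1 / \<rho> > 0" using \<rho> by simp
  have g_le: "\<bar>?g r\<bar> \<le> ?h r" if "r \<in> {1/\<rho><..}" for r
  proof -
    have "1 / \<rho> < r" using that by simp
    hence "r > 0" "\<rho> * r \<ge> 1" using R \<rho> by (linarith, simp add: field_simps)
    thus ?thesis by (intro abs_bessel_J1_parts_le C(2) C'(2))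
  qed
  have h_int: "set_integrable lborel {1/\<rho><..} ?h"
    by (rule set_integrable_mult_right[OF phi_env_tail(1)[OF \<rho>]])
  show g_int: "set_integrable lborel {1/\<rho><..} ?g"
  proof (rule set_integrable_bound_continuous_on[OF h_int _ _ g_le])
    have "continuous_on {0<..} ?g"
      using \<rho> by (intro continuous_on_divide continuous_on_mult continuous_on_diff cont continuous_intros) auto
    thus "continuous_on {1/\<rho><..} ?g" by (rule continuous_on_subset) (use R in auto)
  qed auto
  have "\<bar>LINT r:{1/\<rho><..}|lborel. ?g r\<bar> \<le> (LINT r:{1/\<rho><..}|lborel. \<bar>?g r\<bar>)"
    using set_integral_norm_bound[OF g_int] by simp
  also have "\<dots> \<le> (LINT r:{1/\<rho><..}|lborel. ?h r)"
    by (rule set_integral_mono[OF set_integrable_abs[OF g_int] h_int g_le])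
  also have "\<dots> \<le> 2 * (C + C') * (4 * A * B * (m (1 / \<rho>) + 1))"
    using phi_env_tail(2)[OF \<rho>] C(1) C'(1) by (simp add: mult_left_mono)
  finally show "\<bar>LINT r:{1/\<rho><..}|lborel. ?g r\<bar> \<le> 8 * (C + C') * A * B * (m (1 / \<rho>) + 1)"
    by (simp add: algebra_simps)
qed

lemma bessel_transform_tail_by_parts:
  assumes \<psi>: "euler_bounded \<phi> 0 \<psi>" and \<psi>': "\<And>r. r > 0 \<Longrightarrow> (\<psi> has_real_derivative \<psi>' r) (at r)"
    and times_\<psi>': "continuous_on {0<..} (\<lambda>r. r * \<psi>' r)"
    and g_int: "set_integrable lborel {1/\<rho><..} (\<lambda>r. bessel_J1 (\<rho> * r) * (r * \<psi>' r - \<psi> r) / (\<rho> * r))"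
    and \<rho>: "\<rho> > 0"
  shows "(LINT r:{1/\<rho><..}|lborel. bessel_J0 (\<rho> * r) * \<psi> r)
    = - bessel_J1 1 * \<psi> (1/\<rho>) / \<rho>
      - (LINT r:{1/\<rho><..}|lborel. bessel_J1 (\<rho> * r) * (r * \<psi>' r - \<psi> r) / (\<rho> * r))"
proof -
  let ?f = "\<lambda>r. bessel_J0 (\<rho> * r) * \<psi> r"
  let ?g = "\<lambda>r. bessel_J1 (\<rho> * r) * (r * \<psi>' r - \<psi> r) / (\<rho> * r)"
  let ?F = "\<lambda>r. bessel_J1 (\<rho> * r) * \<psi> r / \<rho>"
  have R: "1 / \<rho> > 0" using \<rho> by simp
  have pos: "r > 0" if "1 / \<rho> < r" for r using that R by linarith
  have cont: "continuous_on {0<..} \<psi>" using \<psi> by simp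
  have "continuous_on {0<..} (\<lambda>r. ?f r + ?g r)" "continuous_on {0<..} ?F"
    using \<rho> by (intro continuous_on_add continuous_on_divide continuous_on_mult continuous_on_diff
        cont times_\<psi>' continuous_intros; simp)+
  hence isCont: "isCont (\<lambda>r. ?f r + ?g r) r" "isCont ?F r" if "r > 0" for r
    using that by (simp_all add: continuous_on_eq_continuous_at)
  have f_int: "set_integrable lborel {1/\<rho><..} ?f"
    using set_integrable_bessel_J0_times[OF \<psi> \<rho>] by (rule set_integrable_subset) (use pos \<rho> in auto)
  have F_at_R: "(?F \<longlongrightarrow> ?F (1/\<rho>)) (at_right (1/\<rho>))"
    using isCont(2)[OF R] by (simp add: isCont_def filterlim_at_split)
  have F_at_top: "(?F \<longlongrightarrow> 0) at_top"
  proof (rule Lim_null_comparison)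
    show "\<forall>\<^sub>F r in at_top. norm (?F r) \<le> \<bar>\<psi> r\<bar> / \<rho>"
    proof (rule eventually_at_top_linorderI[of 0])
      fix r :: real assume "0 \<le> r"
      hence "\<bar>bessel_J1 (\<rho> * r)\<bar> * \<bar>\<psi> r\<bar> \<le> 1 * \<bar>\<psi> r\<bar>"
        using abs_bessel_J1_le_1[of "\<rho> * r"] \<rho> by (intro mult_right_mono) auto
      thus "norm (?F r) \<le> \<bar>\<psi> r\<bar> / \<rho>" using \<rho> by (simp add: abs_mult divide_right_mono)
    qed
    show "((\<lambda>r. \<bar>\<psi> r\<bar> / \<rho>) \<longlongrightarrow> 0) at_top"
      using tendsto_divide_zero[OF tendsto_rabs_zero[OF euler_bounded_phi_tendsto_0[OF \<psi>]]] by blast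
  qed
  have "(?F has_real_derivative ?f r + ?g r) (at r)" if "1 / \<rho> < r" for r
    by (rule has_real_derivative_bessel_J1_times[where \<psi>'=\<psi>', OF \<psi>'[OF pos[OF that]] \<rho> pos[OF that]])
  hence "(LINT r:{1/\<rho><..}|lborel. ?f r + ?g r) = 0 - ?F (1/\<rho>)"
    using pos by (intro set_integral_Ioi_FTC[OF _ isCont(1) set_integral_add(1)[OF f_int g_int] F_at_R F_at_top]) auto
  thus ?thesis using set_integral_add(2)[OF f_int g_int] \<rho> by simp
qed

lemma bessel_J0_head_le:
  assumes C: "C \<ge> 0" "\<And>r. r > 0 \<Longrightarrow> \<bar>\<psi> r\<bar> \<le> C * \<phi> r"
    and f_int: "set_integrable lborel {0<..1/\<rho>} (\<lambda>r. bessel_J0 (\<rho> * r) * \<psi> r)" and \<rho>: "\<rho> > 0"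
  shows "\<bar>LINT r:{0<..1/\<rho>}|lborel. bessel_J0 (\<rho> * r) * \<psi> r\<bar> \<le> C * (m (1 / \<rho>) + 1)"
proof -
  have R: "1 / \<rho> > 0" using \<rho> by simp
  have "\<bar>LINT r:{0<..1/\<rho>}|lborel. bessel_J0 (\<rho> * r) * \<psi> r\<bar>
      \<le> (LINT r:{0<..1/\<rho>}|lborel. \<bar>bessel_J0 (\<rho> * r) * \<psi> r\<bar>)"
    using set_integral_norm_bound[OF f_int] by simp
  also have "\<dots> \<le> (LINT r:{0<..1/\<rho>}|lborel. C * \<phi> r)"
  proof (rule set_integral_mono[OF set_integrable_abs[OF f_int]
        set_integrable_mult_right[OF set_integral_phi_Ioc(1)[OF R]]])
    fix r :: real assume "r \<in> {0<..1/\<rho>}"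
    hence r: "r > 0" by simp
    have "\<bar>bessel_J0 (\<rho> * r) * \<psi> r\<bar> \<le> 1 * \<bar>\<psi> r\<bar>"
      unfolding abs_mult using abs_bessel_J0_le_1[of "\<rho> * r"] \<rho> r by (intro mult_right_mono) auto
    thus "\<bar>bessel_J0 (\<rho> * r) * \<psi> r\<bar> \<le> C * \<phi> r" using C(2)[OF r] by simp
  qed
  also have "\<dots> \<le> C * (m (1 / \<rho>) + 1)"
    using set_integral_phi_Ioc(2)[OF R] m0_nonneg C(1) by (simp add: mult_left_mono)
  finally show ?thesis .
qed

lemma bessel_transform_bound:
  assumes "euler_bounded \<phi> (Suc 0) \<psi>"
  obtains K where "\<And>\<rho>. \<rho> > 0 \<Longrightarrow> \<bar>bessel_transform \<psi> \<rho>\<bar> \<le> K * (m (1 / \<rho>) + 1)"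
proof -
  have \<psi>: "euler_bounded \<phi> 0 \<psi>" using assms by (rule euler_bounded_0D)
  obtain \<psi>' where \<psi>': "\<And>r. r > 0 \<Longrightarrow> (\<psi> has_real_derivative \<psi>' r) (at r)"
    and times_\<psi>': "euler_bounded \<phi> 0 (\<lambda>r. r * \<psi>' r)" using assms by auto
  obtain C where C: "C \<ge> 0" "\<And>r. r > 0 \<Longrightarrow> \<bar>\<psi> r\<bar> \<le> C * \<phi> r"
    using euler_bounded_phi_constant[OF \<psi>] by blast
  obtain C' where C': "C' \<ge> 0" "\<And>r. r > 0 \<Longrightarrow> \<bar>r * \<psi>' r\<bar> \<le> C' * \<phi> r"
    using euler_bounded_phi_constant[OF times_\<psi>'] by blast
  have cont: "continuous_on {0<..} \<psi>" "continuous_on {0<..} (\<lambda>r. r * \<psi>' r)"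
    using \<psi> times_\<psi>' by simp_all
  have "\<bar>bessel_transform \<psi> \<rho>\<bar> \<le> (C + C * A + 8 * (C + C') * A * B) * (m (1 / \<rho>) + 1)"
    if \<rho>: "\<rho> > 0" for \<rho>
  proof -
    let ?f = "\<lambda>r. bessel_J0 (\<rho> * r) * \<psi> r"
    let ?g = "\<lambda>r. bessel_J1 (\<rho> * r) * (r * \<psi>' r - \<psi> r) / (\<rho> * r)"
    have R: "1 / \<rho> > 0" using \<rho> by simp
    note f_int = set_integrable_bessel_J0_times[OF \<psi> \<rho>]
    note tail = bessel_J1_parts_tail[OF C C' cont \<rho>]
    have "bessel_transform \<psi> \<rho> = (LINT r:{0<..1/\<rho>}|lborel. ?f r) + (LINT r:{1/\<rho><..}|lborel. ?f r)"
      unfolding bessel_transform_def ivl_disj_un_one(5)[OF less_imp_le[OF R], symmetric]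
      using R by (intro set_integral_Un set_integrable_subset[OF f_int]) (auto simp: less_trans)
    also have "(LINT r:{1/\<rho><..}|lborel. ?f r) = - bessel_J1 1 * \<psi> (1/\<rho>) / \<rho> - (LINT r:{1/\<rho><..}|lborel. ?g r)"
      by (rule bessel_transform_tail_by_parts[OF \<psi> \<psi>' cont(2) tail(1) \<rho>])
    finally have "\<bar>bessel_transform \<psi> \<rho>\<bar> \<le> \<bar>LINT r:{0<..1/\<rho>}|lborel. ?f r\<bar>
        + (\<bar>- (bessel_J1 1 * \<psi> (1/\<rho>) / \<rho>)\<bar> + \<bar>LINT r:{1/\<rho><..}|lborel. ?g r\<bar>)"
      by (simp only: order_trans[OF abs_triangle_ineq add_left_mono[OF abs_triangle_ineq4]])
    moreover have "\<bar>- (bessel_J1 1 * \<psi> (1/\<rho>) / \<rho>)\<bar> \<le> C * A * (m (1/\<rho>) + 1)"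
    proof -
      have "\<bar>- (bessel_J1 1 * \<psi> (1/\<rho>) / \<rho>)\<bar> = \<bar>bessel_J1 1 * \<psi> (1/\<rho>) * (1/\<rho>)\<bar>" by simp
      also have "\<dots> \<le> 1 * (C * \<phi> (1/\<rho>)) * (1/\<rho>)"
        using abs_bessel_J1_le_1[of 1] C(2)[OF R] R unfolding abs_mult by (intro mult_right_mono mult_mono) auto
      also have "\<dots> \<le> C * (A * (m (1/\<rho>) + 1))"
        using mult_left_mono[OF times_phi_le[OF R] C(1)] by (simp add: mult_ac)
      finally show ?thesis by (simp add: mult_ac)
    qed
    moreover have "set_integrable lborel {0<..1/\<rho>} ?f" by (rule set_integrable_subset[OF f_int]) auto
    note head = bessel_J0_head_le[OF C this \<rho>]
    moreover have "(C + C * A + 8 * (C + C') * A * B) * (m (1 / \<rho>) + 1)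
        = C * (m (1 / \<rho>) + 1) + C * A * (m (1 / \<rho>) + 1) + 8 * (C + C') * A * B * (m (1 / \<rho>) + 1)"
      by (simp add: algebra_simps)
    ultimately show ?thesis using head tail(2) by linarith
  qed
  thus ?thesis using that by blast
qed

end

text \<open>An antiderivative of \<open>J\<^sub>0(t)/t\<close> on \<open>(0, \<infinity>)\<close>. Since \<open>\<rho> \<partial>\<^sub>\<rho> E(\<rho> r) = r \<partial>\<^sub>r E(\<rho> r)\<close>, it lets us
  integrate by parts in \<open>r\<close> to differentiate the Bessel transform in \<open>\<rho>\<close>. At \<open>u = 0\<close> the
  integrand is \<open>0 / 0 = 0\<close>, which is also its limit.\<close>

definition bessel_E :: "real \<Rightarrow> real" where
  "bessel_E t = ln t + integral {0..t} (\<lambda>u. (bessel_J0 u - 1) / u)"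

lemma isCont_bessel_J0_minus_1_quotient: "isCont (\<lambda>u. (bessel_J0 u - 1) / u) u"
proof (cases "u = 0")
  case True
  have "((\<lambda>h. (bessel_J0 (0 + h) - bessel_J0 0) / h) \<longlongrightarrow> - bessel_J1 0) (at 0)"
    using has_real_derivative_bessel_J0[of 0] by (simp add: DERIV_def)
  thus ?thesis using True by (simp add: isCont_def)
qed (auto intro!: continuous_intros isCont_bessel_J0)

lemma has_real_derivative_bessel_E:
  assumes "t > 0"
  shows "(bessel_E has_real_derivative bessel_J0 t / t) (at t)"
proof -
  have "((\<lambda>x. integral {0..x} (\<lambda>u. (bessel_J0 u - 1) / u)) has_real_derivative (bessel_J0 t - 1) / t)
          (at t within {0..t+1})"
    by (rule integral_has_real_derivative)
       (use assms in \<open>auto intro: continuous_at_imp_continuous_on isCont_bessel_J0_minus_1_quotient\<close>)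
  moreover have "at t within {0..t+1} = at t" using assms by (intro at_within_interior) auto
  ultimately have "(bessel_E has_real_derivative 1 / t + (bessel_J0 t - 1) / t) (at t)"
    unfolding bessel_E_def[abs_def] using assms by (auto intro!: derivative_eq_intros)
  thus ?thesis using assms by (simp add: diff_divide_distrib)
qed

lemma has_real_derivative_bessel_E_mult:
  assumes "s > 0" "r > 0"
  shows "((\<lambda>s. bessel_E (s * r)) has_real_derivative bessel_J0 (s * r) / s) (at s)"
    and "((\<lambda>r. bessel_E (s * r)) has_real_derivative bessel_J0 (s * r) / r) (at r)"
proof -
  have "((\<lambda>s. bessel_E (s * r)) has_real_derivative bessel_J0 (s * r) / (s * r) * r) (at s)"
       "((\<lambda>r. bessel_E (s * r)) has_real_derivative bessel_J0 (s * r) / (s * r) * s) (at r)"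
    by (rule DERIV_chain2[OF has_real_derivative_bessel_E]; use assms in \<open>auto intro!: derivative_eq_intros\<close>)+
  thus "((\<lambda>s. bessel_E (s * r)) has_real_derivative bessel_J0 (s * r) / s) (at s)"
    "((\<lambda>r. bessel_E (s * r)) has_real_derivative bessel_J0 (s * r) / r) (at r)"
    using assms by simp_all
qed

lemma continuous_on_bessel_E_mult: "\<rho> > 0 \<Longrightarrow> continuous_on {0<..} (\<lambda>r. bessel_E (\<rho> * r))"
  by (intro continuous_at_imp_continuous_on ballI DERIV_isCont[OF has_real_derivative_bessel_E_mult(2)]) auto

lemma abs_bessel_E_diff_le:
  assumes "r > 0" "c > 0" "c \<le> \<rho>" "c \<le> \<rho>'"
  shows "\<bar>bessel_E (\<rho> * r) - bessel_E (\<rho>' * r)\<bar> \<le> \<bar>\<rho> - \<rho>'\<bar> * (2 * bessel_env (c * r) / c)"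
proof -
  have "\<bar>bessel_E (b * r) - bessel_E (a * r)\<bar> \<le> \<bar>b - a\<bar> * (2 * bessel_env (c * r) / c)"
    if ab: "c \<le> a" "a < b" for a b
  proof -
    have deriv: "((\<lambda>s. bessel_E (s * r)) has_real_derivative bessel_J0 (x * r) / x) (at x)"
      if "a \<le> x" "x \<le> b" for x
      using has_real_derivative_bessel_E_mult(1)[of x r] that ab assms by simp
    obtain z where z: "a < z" "z < b"
      "bessel_E (b * r) - bessel_E (a * r) = (b - a) * (bessel_J0 (z * r) / z)"
      using MVT2[OF ab(2) deriv] by blast
    have z_pos: "z > 0" using z ab assms by linarith
    have "\<bar>bessel_J0 (z * r)\<bar> \<le> 2 * bessel_env (c * r)"
      using abs_bessel_J0_le_env[of "z * r"] bessel_env_antimono[of "c * r" "z * r"] z_pos z ab assms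
      by (simp add: mult_right_mono)
    hence "\<bar>bessel_J0 (z * r) / z\<bar> \<le> 2 * bessel_env (c * r) / c"
      using z_pos z ab assms bessel_env_pos[of "c * r"]
      by (simp add: abs_div frac_le)
    thus ?thesis unfolding z(3) abs_mult using ab by (intro mult_left_mono) auto
  qed
  note ordered = this
  consider "\<rho> = \<rho>'" | "\<rho>' < \<rho>" | "\<rho> < \<rho>'" by linarith
  thus ?thesis
  proof cases
    case 2 thus ?thesis using ordered[of \<rho>' \<rho>] assms by simp
  next
    case 3 thus ?thesis using ordered[of \<rho> \<rho>'] assms by (simp add: abs_minus_commute)
  qed simp
qed


lemma set_integral_dominated_convergence_at_within:
  fixes s :: "real \<Rightarrow> real \<Rightarrow> real"
  assumes A: "A \<in> sets borel" and cont: "continuous_on A f" "\<And>h. h \<in> S \<Longrightarrow> continuous_on A (s h)"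
    and w: "set_integrable lborel A w"
    and lim: "\<And>x. x \<in> A \<Longrightarrow> ((\<lambda>h. s h x) \<longlongrightarrow> f x) (at a within S)"
    and bound: "\<And>h x. h \<in> S \<Longrightarrow> x \<in> A \<Longrightarrow> \<bar>s h x\<bar> \<le> w x"
  shows "((\<lambda>h. LINT x:A|lborel. s h x) \<longlongrightarrow> (LINT x:A|lborel. f x)) (at a within S)"
proof -
  have "(\<lambda>i. LINT x:A|lborel. s (X i) x) \<longlonglongrightarrow> (LINT x:A|lborel. f x)"
    if X: "\<forall>i. X i \<in> S - {a}" "X \<longlonglongrightarrow> a" for X
    unfolding set_lebesgue_integral_def
  proof (rule integral_dominated_convergence[where w="\<lambda>x. indicator A x *\<^sub>R w x"])
    show "(\<lambda>x. indicator A x *\<^sub>R f x) \<in> borel_measurable lborel"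
      "(\<lambda>x. indicator A x *\<^sub>R s (X i) x) \<in> borel_measurable lborel" for i
      using set_borel_measurable_continuous_on[OF A cont(1)] set_borel_measurable_continuous_on[OF A cont(2)] X
      unfolding set_borel_measurable_def by auto
    show "integrable lborel (\<lambda>x. indicator A x *\<^sub>R w x)" using w unfolding set_integrable_def .
    have X_at: "filterlim X (at a within S) sequentially" using X by (auto simp: filterlim_at)
    show "AE x in lborel. (\<lambda>i. indicator A x *\<^sub>R s (X i) x) \<longlonglongrightarrow> indicator A x *\<^sub>R f x"
      by (intro AE_I2) (auto simp: indicator_def intro: filterlim_compose[OF lim X_at])
    show "AE x in lborel. norm (indicator A x *\<^sub>R s (X i) x) \<le> indicator A x *\<^sub>R w x" for i
      using bound X by (intro AE_I2) (auto simp: indicator_def)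
  qed
  thus ?thesis unfolding tendsto_at_iff_sequentially comp_def by blast
qed

context tame_profile
begin

lemma abs_bessel_E_diff_times_le:
  assumes "\<bar>\<kappa> r\<bar> \<le> C * \<phi> r" "r > 0" "c > 0" "c \<le> \<rho>" "c \<le> \<rho>'"
  shows "\<bar>(bessel_E (\<rho> * r) - bessel_E (\<rho>' * r)) * \<kappa> r\<bar>
    \<le> \<bar>\<rho> - \<rho>'\<bar> * (2 / c) * C * (\<phi> r * bessel_env (c * r))"
proof -
  have "\<bar>(bessel_E (\<rho> * r) - bessel_E (\<rho>' * r)) * \<kappa> r\<bar>
      \<le> (\<bar>\<rho> - \<rho>'\<bar> * (2 * bessel_env (c * r) / c)) * (C * \<phi> r)"
    unfolding abs_mult using assms bessel_env_pos[of "c * r"]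
    by (intro mult_mono abs_bessel_E_diff_le) auto
  thus ?thesis by (simp add: mult_ac)
qed

lemma set_integrable_bessel_E_diff_times:
  assumes "euler_bounded \<phi> N \<kappa>" "\<rho> > 0" "\<rho>' > 0"
  shows "set_integrable lborel {0<..} (\<lambda>r. (bessel_E (\<rho> * r) - bessel_E (\<rho>' * r)) * \<kappa> r)"
proof -
  obtain C where C: "C \<ge> 0" "\<And>r. r > 0 \<Longrightarrow> \<bar>\<kappa> r\<bar> \<le> C * \<phi> r"
    using euler_bounded_phi_constant[OF assms(1)] by blast
  have "continuous_on {0<..} \<kappa>" using euler_bounded_0D[OF assms(1)] by simp
  hence "continuous_on {0<..} (\<lambda>r. (bessel_E (\<rho> * r) - bessel_E (\<rho>' * r)) * \<kappa> r)"
    using assms(2,3) by (intro continuous_intros continuous_on_bessel_E_mult)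
  moreover have "min \<rho> \<rho>' > 0" using assms(2,3) by simp
  ultimately show ?thesis
  proof (intro set_integrable_bound_continuous_on[OF set_integrable_mult_right[OF set_integrable_phi_env]])
    fix r :: real assume "r \<in> {0<..}"
    hence r: "r > 0" by simp
    show "\<bar>(bessel_E (\<rho> * r) - bessel_E (\<rho>' * r)) * \<kappa> r\<bar>
        \<le> \<bar>\<rho> - \<rho>'\<bar> * (2 / min \<rho> \<rho>') * C * (\<phi> r * bessel_env (min \<rho> \<rho>' * r))"
      using assms(2,3) by (intro abs_bessel_E_diff_times_le[where \<kappa>=\<kappa>, OF C(2)[OF r] r]) auto
  qed auto
qed

lemma bessel_E_diff_times_tendsto_0:
  assumes "euler_bounded \<phi> N \<psi>" "\<rho> > 0" "\<rho>' > 0"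
  shows "((\<lambda>r. (bessel_E (\<rho> * r) - bessel_E (\<rho>' * r)) * (r * \<psi> r)) \<longlongrightarrow> 0) (at_right 0)"
    and "((\<lambda>r. (bessel_E (\<rho> * r) - bessel_E (\<rho>' * r)) * (r * \<psi> r)) \<longlongrightarrow> 0) at_top"
proof -
  define c where "c = min \<rho> \<rho>'"
  define K where "K = \<bar>\<rho> - \<rho>'\<bar> * (2 / c)"
  have c: "c > 0" "c \<le> \<rho>" "c \<le> \<rho>'" using assms by (auto simp: c_def)
  have K: "K \<ge> 0" using c by (simp add: K_def)
  obtain C where C: "C \<ge> 0" "\<And>r. r > 0 \<Longrightarrow> \<bar>\<psi> r\<bar> \<le> C * \<phi> r"
    using euler_bounded_phi_constant[OF assms(1)] by blast
  have bound: "norm ((bessel_E (\<rho> * r) - bessel_E (\<rho>' * r)) * (r * \<psi> r))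
      \<le> K * (bessel_env (c * r) * \<bar>r * \<psi> r\<bar>)" if "r > 0" for r
  proof -
    have "norm ((bessel_E (\<rho> * r) - bessel_E (\<rho>' * r)) * (r * \<psi> r))
        \<le> (\<bar>\<rho> - \<rho>'\<bar> * (2 * bessel_env (c * r) / c)) * \<bar>r * \<psi> r\<bar>"
      unfolding real_norm_def abs_mult[of "bessel_E (\<rho> * r) - bessel_E (\<rho>' * r)"]
      by (intro mult_right_mono abs_bessel_E_diff_le[OF that c]) auto
    thus ?thesis by (simp add: K_def mult_ac)
  qed
  show "((\<lambda>r. (bessel_E (\<rho> * r) - bessel_E (\<rho>' * r)) * (r * \<psi> r)) \<longlongrightarrow> 0) (at_right 0)"
  proof (rule Lim_null_comparison)
    show "\<forall>\<^sub>F r in at_right 0. norm ((bessel_E (\<rho> * r) - bessel_E (\<rho>' * r)) * (r * \<psi> r)) \<le> K * \<bar>r * \<psi> r\<bar>"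
    proof (rule eventually_at_rightI[of 0 1])
      fix r :: real assume "r \<in> {0<..<1}"
      hence r: "r > 0" by simp
      have "K * (bessel_env (c * r) * \<bar>r * \<psi> r\<bar>) \<le> K * \<bar>r * \<psi> r\<bar>"
        using bessel_env_le_1 bessel_env_pos[of "c * r"] c r K
        by (intro mult_left_mono mult_left_le_one_le) (auto simp: less_imp_le)
      thus "norm ((bessel_E (\<rho> * r) - bessel_E (\<rho>' * r)) * (r * \<psi> r)) \<le> K * \<bar>r * \<psi> r\<bar>"
        using bound[OF r] by linarith
    qed simp
    show "((\<lambda>r. K * \<bar>r * \<psi> r\<bar>) \<longlongrightarrow> 0) (at_right 0)"
      using tendsto_mult_right_zero[OF tendsto_rabs_zero[OF euler_bounded_phi_times_tendsto_0[OF assms(1)]]] .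
  qed
  show "((\<lambda>r. (bessel_E (\<rho> * r) - bessel_E (\<rho>' * r)) * (r * \<psi> r)) \<longlongrightarrow> 0) at_top"
  proof (rule Lim_null_comparison)
    have "K * (bessel_env (c * r) * \<bar>r * \<psi> r\<bar>) \<le> (K * C) * (bessel_env (c * r) * (r * \<phi> r))"
      if "r > 0" for r
    proof -
      have "bessel_env (c * r) * \<bar>\<psi> r\<bar> \<le> bessel_env (c * r) * (C * \<phi> r)"
        using C(2)[OF that] bessel_env_pos[of "c * r"] c that by (intro mult_left_mono) auto
      hence "K * (r * (bessel_env (c * r) * \<bar>\<psi> r\<bar>)) \<le> K * (r * (bessel_env (c * r) * (C * \<phi> r)))"
        using mult_left_mono[OF mult_left_mono[OF _ less_imp_le[OF that]] K] by blast
      thus ?thesis using that by (simp add: abs_mult mult_ac)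
    qed
    note times_\<psi>_le = this
    show "\<forall>\<^sub>F r in at_top. norm ((bessel_E (\<rho> * r) - bessel_E (\<rho>' * r)) * (r * \<psi> r))
        \<le> (K * C) * (bessel_env (c * r) * (r * \<phi> r))"
      using order_trans[OF bound times_\<psi>_le] by (intro eventually_at_top_linorderI[of 1]) simp
    show "((\<lambda>r. (K * C) * (bessel_env (c * r) * (r * \<phi> r))) \<longlongrightarrow> 0) at_top"
      using tendsto_mult_right_zero[OF times_phi_env_tendsto_0[OF c(1)]] .
  qed
qed

lemma bessel_transform_diff:
  assumes \<psi>: "euler_bounded \<phi> 0 \<psi>" and \<psi>': "\<And>r. r > 0 \<Longrightarrow> (\<psi> has_real_derivative \<psi>' r) (at r)"
    and times_\<psi>': "euler_bounded \<phi> 0 (\<lambda>r. r * \<psi>' r)" and \<rho>: "\<rho> > 0" "\<rho>' > 0"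
  shows "bessel_transform \<psi> \<rho> - bessel_transform \<psi> \<rho>'
    = - (LINT r:{0<..}|lborel. (bessel_E (\<rho> * r) - bessel_E (\<rho>' * r)) * (\<psi> r + r * \<psi>' r))"
proof -
  define Q where "Q r = bessel_E (\<rho> * r) - bessel_E (\<rho>' * r)" for r
  define \<kappa> where "\<kappa> r = \<psi> r + r * \<psi>' r" for r
  define f where "f r = (bessel_J0 (\<rho> * r) * \<psi> r - bessel_J0 (\<rho>' * r) * \<psi> r) + Q r * \<kappa> r" for r
  have \<kappa>: "euler_bounded \<phi> 0 \<kappa>" unfolding \<kappa>_def by (rule euler_bounded_add[OF \<psi> times_\<psi>'])
  note J_int = set_integrable_bessel_J0_times[OF \<psi> \<rho>(1)] set_integrable_bessel_J0_times[OF \<psi> \<rho>(2)]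
  have Q_int: "set_integrable lborel {0<..} (\<lambda>r. Q r * \<kappa> r)"
    unfolding Q_def by (rule set_integrable_bessel_E_diff_times[OF \<kappa> \<rho>])
  have deriv: "((\<lambda>r. Q r * (r * \<psi> r)) has_real_derivative f r) (at r)" if r: "r > 0" for r
  proof -
    have "((\<lambda>r. Q r * (r * \<psi> r)) has_real_derivative
        (bessel_J0 (\<rho> * r) / r - bessel_J0 (\<rho>' * r) / r) * (r * \<psi> r) + (1 * \<psi> r + \<psi>' r * r) * Q r) (at r)"
      unfolding Q_def[abs_def]
      by (intro DERIV_mult DERIV_diff DERIV_ident \<psi>' r has_real_derivative_bessel_E_mult(2) \<rho>)
    moreover have "(bessel_J0 (\<rho> * r) / r - bessel_J0 (\<rho>' * r) / r) * (r * \<psi> r)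
        + (1 * \<psi> r + \<psi>' r * r) * Q r = f r"
      unfolding f_def \<kappa>_def using r by (simp add: field_simps)
    ultimately show ?thesis by simp
  qed
  have "continuous_on {0<..} \<psi>" "continuous_on {0<..} \<kappa>"
    using euler_bounded_0D[OF \<psi>] euler_bounded_0D[OF \<kappa>] by auto
  hence "continuous_on {0<..} f"
    using \<rho> unfolding f_def Q_def by (intro continuous_intros continuous_on_bessel_E_mult)
  hence cont: "isCont f r" if "r > 0" for r
    using that continuous_on_eq_continuous_at[of "{0<..}" f] by auto
  have f_int: "set_integrable lborel {0<..} f"
    unfolding f_def by (intro set_integral_add(1) set_integral_diff(1) J_int Q_int)
  have "(LINT r:{0<..}|lborel. f r) = 0 - 0"
    using bessel_E_diff_times_tendsto_0[OF \<psi> \<rho>] unfolding Q_def[symmetric]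
    by (intro set_integral_Ioi_FTC[OF deriv cont f_int])
  thus ?thesis
    using set_integral_add(2)[OF set_integral_diff(1)[OF J_int] Q_int] set_integral_diff(2)[OF J_int]
    unfolding f_def bessel_transform_def Q_def \<kappa>_def by simp
qed

lemma bessel_E_quotient_integral_tendsto:
  assumes \<kappa>: "euler_bounded \<phi> 0 \<kappa>" and \<rho>: "\<rho> > 0"
  shows "((\<lambda>h. LINT r:{0<..}|lborel. (bessel_E ((\<rho> + h) * r) - bessel_E (\<rho> * r)) * \<kappa> r * (- 1 / h))
    \<longlongrightarrow> (LINT r:{0<..}|lborel. bessel_J0 (\<rho> * r) * \<kappa> r * (- 1 / \<rho>))) (at 0 within {-(\<rho>/2)<..<\<rho>/2})"
proof -
  let ?S = "{-(\<rho>/2)<..<\<rho>/2}"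
  let ?s = "\<lambda>h r. (bessel_E ((\<rho> + h) * r) - bessel_E (\<rho> * r)) * \<kappa> r * (- 1 / h)"
  have \<kappa>_cont: "continuous_on {0<..} \<kappa>" using \<kappa> by simp
  obtain C where C: "C \<ge> 0" "\<And>r. r > 0 \<Longrightarrow> \<bar>\<kappa> r\<bar> \<le> C * \<phi> r"
    using euler_bounded_phi_constant[OF \<kappa>] by blast
  have S: "\<rho> + h > 0" "\<rho> / 2 \<le> \<rho> + h" if "h \<in> ?S" for h
    using that \<rho> by auto
  show ?thesis
  proof (rule set_integral_dominated_convergence_at_within[OF _ _ _
        set_integrable_mult_right[OF set_integrable_phi_env[of "\<rho> / 2"], of "4 * C / \<rho>"]])
    show "continuous_on {0<..} (\<lambda>r. bessel_J0 (\<rho> * r) * \<kappa> r * (- 1 / \<rho>))"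
      using \<kappa>_cont by (intro continuous_intros) auto
    show "continuous_on {0<..} (?s h)" if "h \<in> ?S" for h
    proof (rule continuous_on_mult[OF _ continuous_on_const])
      show "continuous_on {0<..} (\<lambda>r. (bessel_E ((\<rho> + h) * r) - bessel_E (\<rho> * r)) * \<kappa> r)"
        using \<kappa>_cont \<rho> S(1)[OF that] by (intro continuous_intros continuous_on_bessel_E_mult)
    qed
    fix r :: real assume "r \<in> {0<..}"
    hence r: "r > 0" by simp
    have "((\<lambda>h. (bessel_E ((\<rho> + h) * r) - bessel_E (\<rho> * r)) / h) \<longlongrightarrow> bessel_J0 (\<rho> * r) / \<rho>) (at 0)"
      using has_real_derivative_bessel_E_mult(1)[OF \<rho> r] by (simp add: DERIV_def)
    hence "((\<lambda>h. (bessel_E ((\<rho> + h) * r) - bessel_E (\<rho> * r)) / h * (- \<kappa> r))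
        \<longlongrightarrow> bessel_J0 (\<rho> * r) / \<rho> * (- \<kappa> r)) (at 0 within ?S)"
      by (intro tendsto_within_subset[OF tendsto_mult_right]) auto
    moreover have "(\<lambda>h. ?s h r) = (\<lambda>h. (bessel_E ((\<rho> + h) * r) - bessel_E (\<rho> * r)) / h * (- \<kappa> r))"
      by (auto simp: divide_inverse mult_ac)
    moreover have "bessel_J0 (\<rho> * r) / \<rho> * (- \<kappa> r) = bessel_J0 (\<rho> * r) * \<kappa> r * (- 1 / \<rho>)"
      by (simp add: divide_inverse mult_ac)
    ultimately show "((\<lambda>h. ?s h r) \<longlongrightarrow> bessel_J0 (\<rho> * r) * \<kappa> r * (- 1 / \<rho>)) (at 0 within ?S)"
      by argo
    show "\<bar>?s h r\<bar> \<le> 4 * C / \<rho> * (\<phi> r * bessel_env (\<rho> / 2 * r))" if "h \<in> ?S" for h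
    proof (cases "h = 0")
      case False
      have "\<bar>?s h r\<bar> \<le> \<bar>\<rho> + h - \<rho>\<bar> * (2 / (\<rho> / 2)) * C * (\<phi> r * bessel_env (\<rho> / 2 * r)) * \<bar>- 1 / h\<bar>"
        unfolding abs_mult[of _ "- 1 / h"] using \<rho> S(2)[OF that]
        by (intro mult_right_mono abs_bessel_E_diff_times_le C(2) r) auto
      thus ?thesis using False by (simp add: abs_div field_simps)
    qed (use C(1) \<rho> phi_nonneg[OF r] bessel_env_pos[of "\<rho> / 2 * r"] r in simp)
  qed (use \<rho> in auto)
qed

lemma has_real_derivative_bessel_transform:
  assumes \<psi>: "euler_bounded \<phi> 0 \<psi>" and \<psi>': "\<And>r. r > 0 \<Longrightarrow> (\<psi> has_real_derivative \<psi>' r) (at r)"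
    and times_\<psi>': "euler_bounded \<phi> 0 (\<lambda>r. r * \<psi>' r)" and \<rho>: "\<rho> > 0"
  shows "(bessel_transform \<psi> has_real_derivative - bessel_transform (\<lambda>r. \<psi> r + r * \<psi>' r) \<rho> / \<rho>) (at \<rho>)"
proof -
  define \<kappa> where "\<kappa> r = \<psi> r + r * \<psi>' r" for r
  have \<kappa>: "euler_bounded \<phi> 0 \<kappa>" unfolding \<kappa>_def by (rule euler_bounded_add[OF \<psi> times_\<psi>'])
  define S where "S = {-(\<rho>/2)<..<\<rho>/2}"
  have S: "open S" "0 \<in> S" using \<rho> by (auto simp: S_def)
  let ?s = "\<lambda>h r. (bessel_E ((\<rho> + h) * r) - bessel_E (\<rho> * r)) * \<kappa> r * (- 1 / h)"
  have "(bessel_transform \<psi> (\<rho> + h) - bessel_transform \<psi> \<rho>) / h = (LINT r:{0<..}|lborel. ?s h r)"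
    if "h \<in> S" for h
  proof -
    have pos: "\<rho> + h > 0" using that \<rho> by (simp add: S_def)
    have "(bessel_transform \<psi> (\<rho> + h) - bessel_transform \<psi> \<rho>) / h
        = - (LINT r:{0<..}|lborel. (bessel_E ((\<rho> + h) * r) - bessel_E (\<rho> * r)) * \<kappa> r) / h"
      unfolding \<kappa>_def by (rule arg_cong[OF bessel_transform_diff[OF \<psi> \<psi>' times_\<psi>' pos \<rho>]])
    also have "\<dots> = (LINT r:{0<..}|lborel. (bessel_E ((\<rho> + h) * r) - bessel_E (\<rho> * r)) * \<kappa> r) * (- 1 / h)"
      by simp
    finally show ?thesis by (simp only: set_integral_mult_left)
  qed
  hence quotient: "\<forall>\<^sub>F h in at 0 within S.
      (bessel_transform \<psi> (\<rho> + h) - bessel_transform \<psi> \<rho>) / h = (LINT r:{0<..}|lborel. ?s h r)"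
    by (intro eventually_at_filter[THEN iffD2] always_eventually) simp
  have "(LINT r:{0<..}|lborel. bessel_J0 (\<rho> * r) * \<kappa> r * (- 1 / \<rho>)) = - bessel_transform \<kappa> \<rho> / \<rho>"
    by (simp only: set_integral_mult_left bessel_transform_def) simp
  hence "((\<lambda>h. (bessel_transform \<psi> (\<rho> + h) - bessel_transform \<psi> \<rho>) / h)
      \<longlongrightarrow> - bessel_transform \<kappa> \<rho> / \<rho>) (at 0 within S)"
    using bessel_E_quotient_integral_tendsto[OF \<kappa> \<rho>, folded S_def] unfolding tendsto_cong[OF quotient]
    by simp
  thus ?thesis using at_within_open[OF S(2,1)] unfolding DERIV_def \<kappa>_def by simp
qed

lemma euler_bounded_bessel_transform:
  "euler_bounded \<phi> (Suc N) \<psi> \<Longrightarrow> euler_bounded (\<lambda>\<rho>. m (1 / \<rho>) + 1) N (bessel_transform \<psi>)"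
proof (induction N arbitrary: \<psi>)
  case 0
  obtain K where "\<And>\<rho>. \<rho> > 0 \<Longrightarrow> \<bar>bessel_transform \<psi> \<rho>\<bar> \<le> K * (m (1 / \<rho>) + 1)"
    using bessel_transform_bound[OF 0] by blast
  moreover obtain \<psi>' where "\<forall>r>0. (\<psi> has_real_derivative \<psi>' r) (at r)" "euler_bounded \<phi> 0 (\<lambda>r. r * \<psi>' r)"
    using 0 by auto
  hence "continuous_on {0<..} (bessel_transform \<psi>)"
    using has_real_derivative_bessel_transform[OF euler_bounded_0D[OF 0]] DERIV_isCont
    by (intro continuous_at_imp_continuous_on) blast
  ultimately show ?case by auto
next
  case (Suc N)
  obtain \<psi>' where \<psi>': "\<forall>r>0. (\<psi> has_real_derivative \<psi>' r) (at r)"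
    and times_\<psi>': "euler_bounded \<phi> (Suc N) (\<lambda>r. r * \<psi>' r)" using Suc.prems by auto
  have \<psi>: "euler_bounded \<phi> (Suc N) \<psi>" using Suc.prems by (rule euler_bounded_SucD)
  have deriv: "\<forall>\<rho>>0. (bessel_transform \<psi> has_real_derivative
      - bessel_transform (\<lambda>r. \<psi> r + r * \<psi>' r) \<rho> / \<rho>) (at \<rho>)"
    using has_real_derivative_bessel_transform[OF euler_bounded_0D[OF \<psi>] _ euler_bounded_0D[OF times_\<psi>']] \<psi>'
    by blast
  have "euler_bounded (\<lambda>\<rho>. m (1 / \<rho>) + 1) N (\<lambda>\<rho>. - 1 * bessel_transform (\<lambda>r. \<psi> r + r * \<psi>' r) \<rho>)"
    by (intro euler_bounded_cmult Suc.IH euler_bounded_add \<psi> times_\<psi>')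
  hence "euler_bounded (\<lambda>\<rho>. m (1 / \<rho>) + 1) N
      (\<lambda>\<rho>. \<rho> * (- bessel_transform (\<lambda>r. \<psi> r + r * \<psi>' r) \<rho> / \<rho>))"
    by (rule euler_bounded_cong) auto
  moreover have "euler_bounded (\<lambda>\<rho>. m (1 / \<rho>) + 1) 0 (bessel_transform \<psi>)"
    using Suc.IH[OF \<psi>] by (rule euler_bounded_0D)
  ultimately show ?case using deriv by auto
qed

end

section \<open>Consequences of (H1) and (H2a)\<close>

lemma euler_bounded_of_derivatives:
  fixes g :: "nat \<Rightarrow> real \<Rightarrow> real"
  assumes deriv: "\<And>j r. j < M \<Longrightarrow> r > 0 \<Longrightarrow> (g j has_real_derivative g (Suc j) r) (at r)"
    and cont: "\<And>j. j \<le> M \<Longrightarrow> continuous_on {0<..} (g j)"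
    and bound: "\<And>j r. j \<le> M \<Longrightarrow> r > 0 \<Longrightarrow> \<bar>r ^ j * g j r\<bar> \<le> C * W r"
  shows "euler_bounded W M (g 0)"
proof -
  have "j + K \<le> M \<Longrightarrow> euler_bounded W K (\<lambda>r. r ^ j * g j r)" for j K
  proof (induction K arbitrary: j)
    case 0
    thus ?case using bound[of j] by (auto intro!: continuous_intros cont)
  next
    case (Suc K)
    have "euler_bounded W K (\<lambda>r. real j * (r ^ j * g j r) + r ^ Suc j * g (Suc j) r)"
      using Suc.prems by (intro euler_bounded_add euler_bounded_cmult Suc.IH) auto
    hence "euler_bounded W K (\<lambda>r. r * (real j * r ^ (j - 1) * g j r + r ^ j * g (Suc j) r))"
      by (rule euler_bounded_cong) (auto simp: algebra_simps power_eq_if)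
    moreover have "\<forall>r>0. ((\<lambda>r. r ^ j * g j r) has_real_derivative
        real j * r ^ (j - 1) * g j r + r ^ j * g (Suc j) r) (at r)"
      using Suc.prems by (auto intro!: derivative_eq_intros deriv)
    moreover have "euler_bounded W 0 (\<lambda>r. r ^ j * g j r)"
      using Suc.prems bound[of j] by (auto intro!: continuous_intros cont)
    ultimately show ?case by auto
  qed
  from this[of 0 M] show ?thesis by simp
qed

lemma H1D:
  assumes "H1 n m"
  shows "\<And>k r. k < n + 4 \<Longrightarrow> r > 0 \<Longrightarrow> ((deriv ^^ k) m has_real_derivative (deriv ^^ Suc k) m r) (at r)"
    and "continuous_on {0<..} ((deriv ^^ (n + 4)) m)"
    and "\<And>r. r > 0 \<Longrightarrow> m r > 0"
    and "\<And>r. r > 0 \<Longrightarrow> deriv m r \<ge> 0"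
    and "\<exists>L. ((\<lambda>r. r * deriv m r) \<longlongrightarrow> L) (at_right 0)"
    and "\<exists>C. \<forall>k \<in> {1..n+3}. \<forall>r > 0. \<bar>(deriv ^^ k) (deriv m) r\<bar> \<le> C * r powr (- real k) * deriv m r"
  using assms unfolding H1_def by blast+

lemma euler_bounded_deriv_if_H1:
  assumes "H1 n m"
  shows "euler_bounded (deriv m) (n + 3) (deriv m)"
proof -
  obtain C where C: "\<And>k r. k \<in> {1..n+3} \<Longrightarrow> r > 0 \<Longrightarrow>
      \<bar>(deriv ^^ k) (deriv m) r\<bar> \<le> C * r powr (- real k) * deriv m r"
    using H1D(6)[OF assms] by blast
  have deriv: "((deriv ^^ Suc j) m has_real_derivative (deriv ^^ Suc (Suc j)) m r) (at r)"
    if "j < n + 3" "r > 0" for j r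
    using H1D(1)[OF assms, of "Suc j" r] that by simp
  have "euler_bounded (deriv m) (n + 3) (\<lambda>r. (deriv ^^ Suc 0) m r)"
  proof (rule euler_bounded_of_derivatives[where C="\<bar>C\<bar> + 1"])
    show "continuous_on {0<..} ((deriv ^^ Suc j) m)" if "j \<le> n + 3" for j
    proof (cases "j = n + 3")
      case False
      hence "j < n + 3" using that by simp
      thus ?thesis by (intro continuous_at_imp_continuous_on ballI DERIV_isCont[OF deriv]) auto
    qed (use H1D(2)[OF assms] in \<open>simp add: add.commute\<close>)
    show "\<bar>r ^ j * (deriv ^^ Suc j) m r\<bar> \<le> (\<bar>C\<bar> + 1) * deriv m r" if "j \<le> n + 3" "r > 0" for j r
    proof (cases "j = 0")
      case True
      thus ?thesis using H1D(4)[OF assms that(2)] mult_right_mono[of 1 "\<bar>C\<bar> + 1" "deriv m r"] by simp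
    next
      case False
      hence "\<bar>(deriv ^^ Suc j) m r\<bar> \<le> C * r powr (- real j) * deriv m r"
        using C[of j r] that by (simp add: funpow_Suc_right del: funpow.simps)
      hence "\<bar>r ^ j * (deriv ^^ Suc j) m r\<bar> \<le> r ^ j * (C * r powr (- real j) * deriv m r)"
        using that by (simp add: abs_mult mult_left_mono)
      also have "\<dots> = C * deriv m r"
        using that by (simp add: powr_minus powr_realpow[symmetric] field_simps)
      also have "\<dots> \<le> (\<bar>C\<bar> + 1) * deriv m r"
        using H1D(4)[OF assms that(2)] by (intro mult_right_mono) auto
      finally show ?thesis .
    qed
  qed (use deriv in auto)
  thus ?thesis by simp
qed

context
  fixes m \<phi> :: "real \<Rightarrow> real"
  assumes m_deriv: "\<And>r. r > 0 \<Longrightarrow> (m has_real_derivative \<phi> r) (at r)"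
    and phi_nonneg: "\<And>r. r > 0 \<Longrightarrow> \<phi> r \<ge> 0"
    and m_pos: "\<And>r. r > 0 \<Longrightarrow> m r > 0"
begin

lemma increasing_m: "0 < a \<Longrightarrow> a \<le> b \<Longrightarrow> m a \<le> m b"
  by (rule deriv_nonneg_imp_mono[OF m_deriv phi_nonneg]) auto

lemma m_tendsto_at_right_0: "\<exists>m0. (m \<longlongrightarrow> m0) (at_right 0)"
proof -
  define l where "l = Inf (m ` {0<..})"
  have bdd: "bdd_below (m ` {0<..})" using m_pos by (auto intro!: bdd_belowI[of _ 0] less_imp_le)
  have "(m \<longlongrightarrow> l) (at_right 0)"
  proof (rule decreasing_tendsto)
    show "\<forall>\<^sub>F r in at_right 0. l \<le> m r"
      by (rule eventually_at_rightI[of 0 1]) (auto simp: l_def intro!: cInf_lower bdd)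
    fix x assume "l < x"
    then obtain r0 where r0: "r0 > 0" "m r0 < x"
      unfolding l_def using cInf_less_iff[of "m ` {0<..}" x] bdd by auto
    show "\<forall>\<^sub>F r in at_right 0. m r < x"
    proof (rule eventually_at_rightI[of 0 r0])
      fix r assume "r \<in> {0<..<r0}"
      hence "m r \<le> m r0" by (intro increasing_m) auto
      thus "m r < x" using r0 by linarith
    qed (use r0 in simp)
  qed
  thus ?thesis by blast
qed

text \<open>If \<open>r \<phi>(r) \<ge> L/2 > 0\<close> near \<open>0\<close>, then \<open>m(r) - (L/2) ln r\<close> increases there, forcing \<open>m\<close> negative.\<close>

lemma times_phi_limit_eq_0:
  assumes L: "((\<lambda>r. r * \<phi> r) \<longlongrightarrow> L) (at_right 0)"
  shows "L = 0"
proof -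
  have "L \<ge> 0"
    by (rule tendsto_lowerbound[OF L])
       (auto intro!: eventually_at_rightI[of 0 1] mult_nonneg_nonneg phi_nonneg simp: less_imp_le)
  moreover have "\<not> L > 0"
  proof
    assume L_pos: "L > 0"
    have "\<forall>\<^sub>F r in at_right 0. L / 2 < r * \<phi> r" using order_tendstoD(1)[OF L, of "L/2"] L_pos by simp
    then obtain b where b: "b > 0" "\<And>r. r > 0 \<Longrightarrow> r < b \<Longrightarrow> L / 2 < r * \<phi> r"
      unfolding eventually_at_right_field by auto
    define d where "d = b / 2"
    define e where "e = d * exp (- (2 * m d / L) - 1)"
    have d: "0 < d" "d < b" using b by (auto simp: d_def)
    have "2 * m d / L > 0" using m_pos[of d] d L_pos by simp
    hence e: "0 < e" "e < d" using d by (auto simp: e_def)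
    have "m e - L / 2 * ln e \<le> m d - L / 2 * ln d"
    proof (rule DERIV_nonneg_imp_nondecreasing[OF less_imp_le[OF e(2)]])
      fix x assume x: "e \<le> x" "x \<le> d"
      hence x_pos: "x > 0" using e by linarith
      have "L / 2 < x * \<phi> x" using b(2)[OF x_pos] x d by linarith
      hence "\<phi> x - L / 2 * (1 / x) \<ge> 0" using x_pos by (simp add: field_simps)
      moreover have "((\<lambda>x. m x - L / 2 * ln x) has_real_derivative \<phi> x - L / 2 * (1 / x)) (at x)"
        using m_deriv[OF x_pos] x_pos by (auto intro!: derivative_eq_intros)
      ultimately show "\<exists>y. ((\<lambda>x. m x - L / 2 * ln x) has_real_derivative y) (at x) \<and> 0 \<le> y" by blast
    qed
    also have "ln e = ln d - 2 * m d / L - 1" using d by (simp add: e_def ln_mult)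
    also have "L / 2 * (ln d - 2 * m d / L - 1) = L / 2 * ln d - m d - L / 2"
      using L_pos by (simp add: field_simps)
    finally have "m e \<le> - L / 2" by linarith
    thus False using m_pos[OF e(1)] L_pos by linarith
  qed
  ultimately show ?thesis by linarith
qed

lemma times_phi_le_quarter_if_H2a:
  assumes "H2a m"
  shows "\<exists>R1\<ge>1. \<forall>r\<ge>R1. r * \<phi> r \<le> m r / 4"
proof -
  define mt where "mt s = m (exp s)" for s
  obtain \<beta>1 where \<beta>1: "\<beta>1 \<ge> 0" "((\<lambda>s. s * deriv mt s / mt s) \<longlongrightarrow> \<beta>1) at_top"
    using assms unfolding H2a_def Let_def mt_def by blast
  have deriv_mt: "deriv mt s = exp s * \<phi> (exp s)" for s
  proof -
    have "(mt has_real_derivative \<phi> (exp s) * exp s) (at s)"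
      unfolding mt_def[abs_def] by (rule DERIV_chain2[OF m_deriv DERIV_exp]) simp
    thus ?thesis by (simp add: DERIV_imp_deriv mult.commute)
  qed
  have "\<forall>\<^sub>F s in at_top. s * deriv mt s / mt s < \<beta>1 + 1"
    using order_tendstoD(2)[OF \<beta>1(2)] by simp
  then obtain S0 where S0: "\<And>s. s \<ge> S0 \<Longrightarrow> s * deriv mt s / mt s < \<beta>1 + 1"
    unfolding eventually_at_top_linorder by auto
  define S where "S = max S0 (4 * (\<beta>1 + 1))"
  have "r * \<phi> r \<le> m r / 4" if r: "r \<ge> exp S" for r
  proof -
    have r_pos: "r > 0" using r exp_gt_zero[of S] by linarith
    define s where "s = ln r"
    have exp_s: "exp s = r" and s: "s \<ge> S" using r r_pos by (simp_all add: s_def ln_ge_iff)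
    have mt_pos: "mt s > 0" using m_pos[OF r_pos] exp_s by (simp add: mt_def)
    have "s * deriv mt s < (\<beta>1 + 1) * mt s"
      using S0[of s] s mt_pos by (simp add: S_def field_simps)
    also have "\<dots> \<le> s / 4 * mt s" using s mt_pos by (intro mult_right_mono) (auto simp: S_def)
    finally have "deriv mt s \<le> mt s / 4"
      using s \<beta>1(1) by (simp add: S_def mult_less_cancel_left_pos)
    thus "r * \<phi> r \<le> m r / 4" using deriv_mt[of s] exp_s by (simp add: mt_def)
  qed
  thus ?thesis by (intro exI[of _ "max 1 (exp S)"]) auto
qed

lemma growth_quarter:
  assumes quarter: "\<forall>r\<ge>R1. r * \<phi> r \<le> m r / 4" and R1: "R1 > 0" and R: "R1 \<le> R" "R \<le> r"
  shows "m r \<le> m R * (r / R) powr (1/4)"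
proof -
  have "ln (m r) - ln r / 4 \<le> ln (m R) - ln R / 4"
  proof (rule DERIV_nonpos_imp_nonincreasing[OF R(2)])
    fix x assume x: "R \<le> x" "x \<le> r"
    hence x_pos: "x > 0" using R R1 by linarith
    have "x * \<phi> x \<le> m x / 4" using quarter x R by auto
    hence "\<phi> x / m x - 1 / x / 4 \<le> 0" using x_pos m_pos[OF x_pos] by (simp add: field_simps)
    moreover have "((\<lambda>x. ln (m x) - ln x / 4) has_real_derivative \<phi> x / m x - 1 / x / 4) (at x)"
      using m_deriv[OF x_pos] m_pos[OF x_pos] x_pos by (auto intro!: derivative_eq_intros)
    ultimately show "\<exists>y. ((\<lambda>x. ln (m x) - ln x / 4) has_real_derivative y) (at x) \<and> y \<le> 0" by blast
  qed
  moreover have "ln (m R * (r / R) powr (1/4)) = ln (m R) + (ln r - ln R) / 4"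
    using m_pos[of R] R R1 by (simp add: ln_mult ln_powr ln_div)
  ultimately have "ln (m r) \<le> ln (m R * (r / R) powr (1/4))" by argo
  thus ?thesis using m_pos[of r] m_pos[of R] R R1 by simp
qed

lemma times_phi_le_linear:
  assumes phi_cont: "continuous_on {0<..} \<phi>" and lim: "((\<lambda>r. r * \<phi> r) \<longlongrightarrow> 0) (at_right 0)"
    and quarter: "\<forall>r\<ge>R1. r * \<phi> r \<le> m r / 4" and R1: "R1 > 0"
  shows "\<exists>A. \<forall>r>0. r * \<phi> r \<le> A * (m r + 1)"
proof -
  have "\<forall>\<^sub>F r in at_right 0. r * \<phi> r < 1" using order_tendstoD(2)[OF lim] by simp
  then obtain \<delta> where \<delta>: "\<delta> > 0" "\<And>r. r > 0 \<Longrightarrow> r < \<delta> \<Longrightarrow> r * \<phi> r < 1"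
    unfolding eventually_at_right_field by auto
  define a where "a = min (\<delta> / 2) R1"
  have a: "a > 0" "a \<le> R1" "a < \<delta>" using \<delta> R1 by (auto simp: a_def)
  have "continuous_on {a..R1} (\<lambda>r. r * \<phi> r)"
    using a by (intro continuous_intros continuous_on_subset[OF phi_cont]) auto
  then obtain x where "x \<in> {a..R1}" "\<forall>r\<in>{a..R1}. r * \<phi> r \<le> x * \<phi> x"
    using continuous_attains_sup[of "{a..R1}" "\<lambda>r. r * \<phi> r"] a by auto
  hence M: "\<And>r. r \<in> {a..R1} \<Longrightarrow> r * \<phi> r \<le> x * \<phi> x" by blast
  define A where "A = max 1 (x * \<phi> x)"
  have "r * \<phi> r \<le> A * (m r + 1)" if r: "r > 0" for r
  proof -
    have A: "A \<ge> 1" by (simp add: A_def)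
    have "A \<le> A * (m r + 1)" "m r + 1 \<le> A * (m r + 1)"
      using m_pos[OF r] A mult_left_mono[of 1 "m r + 1" A] mult_right_mono[of 1 A "m r + 1"] by simp_all
    moreover consider "r < \<delta>" | "a \<le> r" "r \<le> R1" | "R1 < r" using a by linarith
    hence "r * \<phi> r \<le> A \<or> r * \<phi> r \<le> m r + 1"
    proof cases
      case 1
      hence "r * \<phi> r \<le> 1" using \<delta>(2)[OF r] by simp
      thus ?thesis by (simp add: A_def le_max_iff_disj)
    next
      case 2 thus ?thesis using M[of r] by (simp add: A_def le_max_iff_disj)
    next
      case 3
      hence "r * \<phi> r \<le> m r / 4" using quarter by simp
      thus ?thesis using m_pos[OF r] by simp
    qed
    ultimately show ?thesis by linarith
  qed
  thus ?thesis by blast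
qed

lemma growth_bound:
  assumes quarter: "\<forall>r\<ge>R1. r * \<phi> r \<le> m r / 4" and R1: "R1 > 0"
  shows "\<exists>B. \<forall>R r. 0 < R \<longrightarrow> R \<le> r \<longrightarrow> m r + 1 \<le> B * (m R + 1) * (r / R) powr (1/4)"
proof -
  define B where "B = m R1 + 1"
  have "m r + 1 \<le> B * (m R + 1) * (r / R) powr (1/4)" if R: "0 < R" "R \<le> r" for R r
  proof -
    have power_ge_1: "(r / R) powr (1/4) \<ge> 1" using R by (simp add: ge_one_powr_ge_zero)
    have mR: "m R + 1 \<ge> 1" and B: "B \<ge> 1" using m_pos[OF R(1)] m_pos[OF R1] by (simp_all add: B_def)
    consider "R1 \<le> R" | "R < R1" "R1 \<le> r" | "r < R1" by linarith
    thus ?thesis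
    proof cases
      case 1
      have "m r + 1 \<le> (m R + 1) * (r / R) powr (1/4)"
        using growth_quarter[OF quarter R1 1 R(2)] power_ge_1 by (simp add: algebra_simps)
      also have "\<dots> \<le> B * ((m R + 1) * (r / R) powr (1/4))"
        using B mR power_ge_1 mult_right_mono[of 1 B] by simp
      finally show ?thesis by (simp add: mult_ac)
    next
      case 2
      have "m r \<le> m R1 * (r / R1) powr (1/4)" by (rule growth_quarter[OF quarter R1 order_refl 2(2)])
      also have "\<dots> \<le> m R1 * (r / R) powr (1/4)"
        using 2 R R1 m_pos[OF R1] by (intro mult_left_mono powr_mono2 divide_left_mono) auto
      finally have "m r + 1 \<le> B * (r / R) powr (1/4)"
        using power_ge_1 by (simp add: B_def algebra_simps)
      also have "\<dots> \<le> B * (m R + 1) * (r / R) powr (1/4)"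
        using B mR power_ge_1 by (simp add: mult_right_mono)
      finally show ?thesis .
    next
      case 3
      have "m r + 1 \<le> B * 1 * 1" using increasing_m[of r R1] R 3 by (simp add: B_def)
      also have "\<dots> \<le> B * (m R + 1) * (r / R) powr (1/4)"
        using B mR power_ge_1 by (intro mult_mono) auto
      finally show ?thesis .
    qed
  qed
  thus ?thesis by blast
qed

end

lemma tame_profile_if_H1_H2a:
  assumes "H1 n m" "H2a m"
  shows "\<exists>m0 A B. tame_profile m (deriv m) m0 A B"
proof -
  have m_deriv: "\<And>r. r > 0 \<Longrightarrow> (m has_real_derivative deriv m r) (at r)"
    using H1D(1)[OF assms(1), of 0] by simp
  have phi_cont: "continuous_on {0<..} (deriv m)"
    using H1D(1)[OF assms(1), of 1] by (intro continuous_at_imp_continuous_on ballI DERIV_isCont) auto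
  note pos = H1D(4,3)[OF assms(1)]
  obtain m0 where m0: "(m \<longlongrightarrow> m0) (at_right 0)" using m_tendsto_at_right_0[OF m_deriv pos] by blast
  obtain L where L: "((\<lambda>r. r * deriv m r) \<longlongrightarrow> L) (at_right 0)" using H1D(5)[OF assms(1)] by blast
  hence lim: "((\<lambda>r. r * deriv m r) \<longlongrightarrow> 0) (at_right 0)"
    using times_phi_limit_eq_0[OF m_deriv pos L] by simp
  obtain R1 where R1: "R1 \<ge> 1" "\<forall>r\<ge>R1. r * deriv m r \<le> m r / 4"
    using times_phi_le_quarter_if_H2a[OF m_deriv pos assms(2)] by blast
  have R1_pos: "R1 > 0" using R1(1) by simp
  obtain A where A: "\<forall>r>0. r * deriv m r \<le> A * (m r + 1)"
    using times_phi_le_linear[OF m_deriv pos phi_cont lim R1(2) R1_pos] by blast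
  obtain B where B: "\<forall>R r. 0 < R \<longrightarrow> R \<le> r \<longrightarrow> m r + 1 \<le> B * (m R + 1) * (r / R) powr (1/4)"
    using growth_bound[OF m_deriv pos R1(2) R1_pos] by blast
  have "tame_profile m (deriv m) m0 A B"
    by unfold_locales (use m_deriv phi_cont pos m0 lim A B in auto)
  thus ?thesis by blast
qed

section \<open>Radial symbol fields in the plane\<close>

definition radial_monomial :: "(real \<Rightarrow> real) \<times> nat \<times> nat \<times> (real^2) \<Rightarrow> real^2 \<Rightarrow> real^2" where
  "radial_monomial t x = (case t of (a, i, j, v) \<Rightarrow> (a (norm x) * (x$1)^i * (x$2)^j) *\<^sub>R v)"

definition radial_sum :: "((real \<Rightarrow> real) \<times> nat \<times> nat \<times> (real^2)) list \<Rightarrow> real^2 \<Rightarrow> real^2" where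
  "radial_sum ts x = (\<Sum>t\<leftarrow>ts. radial_monomial t x)"

text \<open>Each term \<open>a(|x|) x\<^sub>1\<^sup>i x\<^sub>2\<^sup>j v\<close> of a symbol field is \<open>O(|x|\<^sup>s w(|x|))\<close>, and its partial
  derivatives are sums of terms of the same kind, with \<open>s - 1\<close> and \<open>N - 1\<close> in place of \<open>s\<close> and \<open>N\<close>.\<close>

definition symbol_field :: "(real \<Rightarrow> real) \<Rightarrow> nat \<Rightarrow> real \<Rightarrow> (real^2 \<Rightarrow> real^2) \<Rightarrow> bool" where
  "symbol_field w N s F \<longleftrightarrow> (\<exists>ts.
     (\<forall>(a, i, j, v) \<in> set ts. euler_bounded (\<lambda>\<rho>. \<rho> powr (s - real i - real j) * w \<rho>) N a) \<and>
     (\<forall>x. x \<noteq> 0 \<longrightarrow> F x = radial_sum ts x))"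

lemma radial_sum_simps [simp]:
  "radial_sum [] x = 0" "radial_sum (t # ts) x = radial_monomial t x + radial_sum ts x"
  "radial_sum (ts @ ts') x = radial_sum ts x + radial_sum ts' x"
  by (simp_all add: radial_sum_def)

lemma has_derivative_radial_monomial:
  fixes x :: "real^2"
  assumes x: "x \<noteq> 0" and a: "(a has_real_derivative b (norm x)) (at (norm x))"
  shows "(radial_monomial (a, i, j, v) has_derivative (\<lambda>h. radial_sum
     [(\<lambda>\<rho>. h$1 * (b \<rho> / \<rho>), Suc i, j, v), (\<lambda>\<rho>. h$2 * (b \<rho> / \<rho>), i, Suc j, v),
      (\<lambda>\<rho>. h$1 * (real i * a \<rho>), i - 1, j, v), (\<lambda>\<rho>. h$2 * (real j * a \<rho>), i, j - 1, v)] x)) (at x)"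
proof -
  have norm: "((\<lambda>x. a (norm x)) has_derivative (\<lambda>h. b (norm x) * (h \<bullet> sgn x))) (at x)"
    using has_derivative_compose[OF has_derivative_norm[OF x] a[unfolded has_field_derivative_def]] .
  have coord: "((\<lambda>x::real^2. x$k) has_derivative (\<lambda>h. h$k)) (at x)" for k
    by (rule bounded_linear_imp_has_derivative) (rule bounded_linear_vec_nth)
  have "(radial_monomial (a, i, j, v) has_derivative
     (\<lambda>h. (b (norm x) * (h \<bullet> sgn x) * (x$1)^i * (x$2)^j
          + a (norm x) * (real i * h$1 * (x$1)^(i-1)) * (x$2)^j
          + a (norm x) * (x$1)^i * (real j * h$2 * (x$2)^(j-1))) *\<^sub>R v)) (at x)"
    unfolding radial_monomial_def[abs_def] case_prod_conv
    by (rule has_derivative_eq_rhs, (rule derivative_eq_intros norm coord | simp)+) (simp add: algebra_simps)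
  moreover have "(b (norm x) * (h \<bullet> sgn x) * (x$1)^i * (x$2)^j
          + a (norm x) * (real i * h$1 * (x$1)^(i-1)) * (x$2)^j
          + a (norm x) * (x$1)^i * (real j * h$2 * (x$2)^(j-1))) *\<^sub>R v
      = radial_sum [(\<lambda>\<rho>. h$1 * (b \<rho> / \<rho>), Suc i, j, v), (\<lambda>\<rho>. h$2 * (b \<rho> / \<rho>), i, Suc j, v),
          (\<lambda>\<rho>. h$1 * (real i * a \<rho>), i - 1, j, v), (\<lambda>\<rho>. h$2 * (real j * a \<rho>), i, j - 1, v)] x"
    for h :: "real^2"
  proof -
    have sgn: "h \<bullet> sgn x = (h$1 * x$1 + h$2 * x$2) / norm x"
      by (simp add: sgn_div_norm inner_vec_def sum_2 divide_inverse mult_ac distrib_left)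
    have "b (norm x) * (h \<bullet> sgn x) * (x$1)^i * (x$2)^j
          + a (norm x) * (real i * h$1 * (x$1)^(i-1)) * (x$2)^j
          + a (norm x) * (x$1)^i * (real j * h$2 * (x$2)^(j-1))
        = h$1 * (b (norm x) / norm x) * (x$1)^Suc i * (x$2)^j + h$2 * (b (norm x) / norm x) * (x$1)^i * (x$2)^Suc j
          + h$1 * (real i * a (norm x)) * (x$1)^(i-1) * (x$2)^j + h$2 * (real j * a (norm x)) * (x$1)^i * (x$2)^(j-1)"
      unfolding sgn using x by (simp add: field_simps)
    thus ?thesis
      by (simp only: radial_sum_simps radial_monomial_def case_prod_conv scaleR_add_left add_0_right add.assoc)
  qed
  ultimately show ?thesis by simp
qed

lemma radial_monomial_derivative:
  assumes "euler_bounded (\<lambda>\<rho>. \<rho> powr (s - real i - real j) * w \<rho>) (Suc N) a"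
  shows "\<exists>ts. (\<forall>(a', i', j', v') \<in> set ts. euler_bounded (\<lambda>\<rho>. \<rho> powr (s - 1 - real i' - real j') * w \<rho>) N a') \<and>
    (\<forall>x. x \<noteq> 0 \<longrightarrow> (\<exists>D. (radial_monomial (a, i, j, v) has_derivative D) (at x) \<and> D h = radial_sum ts x))"
proof -
  let ?W = "\<lambda>k \<rho>. \<rho> powr (s - k) * w \<rho>"
  obtain b where b: "\<forall>\<rho>>0. (a has_real_derivative b \<rho>) (at \<rho>)"
    and times_b: "euler_bounded (?W (i + j)) N (\<lambda>\<rho>. \<rho> * b \<rho>)"
    using assms by (auto simp: diff_diff_eq)
  have a: "euler_bounded (?W (i + j)) N a" using euler_bounded_SucD assms by (simp add: diff_diff_eq)
  have b_div: "euler_bounded (?W (i + j + 2)) N (\<lambda>\<rho>. b \<rho> / \<rho>)"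
  proof (rule euler_bounded_cong[OF euler_bounded_mult_powr[OF times_b, of "-2"]])
    fix r :: real assume r: "r > 0"
    have "r powr (-2) * r powr (s - real (i + j)) = r powr (s - real (i + j + 2))"
      by (simp add: powr_add[symmetric] algebra_simps)
    thus "r powr (-2) * (r powr (s - real (i + j)) * w r) = r powr (s - real (i + j + 2)) * w r"
      by (simp add: mult.assoc[symmetric])
    show "r powr (-2) * (r * b r) = b r / r"
      using r by (simp add: powr_minus powr_numeral power2_eq_square field_simps)
  qed
  have b_div': "euler_bounded (\<lambda>\<rho>. \<rho> powr (s - 1 - real i' - real j') * w \<rho>) N (\<lambda>\<rho>. c * (b \<rho> / \<rho>))"
    if "i' + j' = i + j + 1" for c i' j'
  proof -
    have "real i' + real j' = real i + real j + 1" using arg_cong[OF that, of real] by simp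
    hence e: "s - 1 - real i' - real j' = s - real (i + j + 2)" by simp
    show ?thesis unfolding e by (rule euler_bounded_cmult[OF b_div])
  qed
  have times_a: "euler_bounded (\<lambda>\<rho>. \<rho> powr (s - 1 - real i' - real j') * w \<rho>) N (\<lambda>\<rho>. c * (real k * a \<rho>))"
    if "k = 0 \<or> i' + j' + 1 = i + j" for c k i' j'
    using that
  proof
    assume "i' + j' + 1 = i + j"
    hence "real i' + real j' + 1 = real i + real j" using arg_cong[of _ _ real] by fastforce
    hence e: "s - 1 - real i' - real j' = s - real (i + j)" by simp
    show ?thesis unfolding e using euler_bounded_cmult[OF a, of "c * real k"] by (simp add: mult.assoc)
  qed (simp add: euler_bounded_zero)
  let ?ts = "[(\<lambda>\<rho>. h$1 * (b \<rho> / \<rho>), Suc i, j, v), (\<lambda>\<rho>. h$2 * (b \<rho> / \<rho>), i, Suc j, v),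
      (\<lambda>\<rho>. h$1 * (real i * a \<rho>), i - 1, j, v), (\<lambda>\<rho>. h$2 * (real j * a \<rho>), i, j - 1, v)]"
  have disj: "i = 0 \<or> i - 1 + j + 1 = i + j" "j = 0 \<or> i + (j - 1) + 1 = i + j" by arith+
  have "\<forall>(a', i', j', v') \<in> set ?ts. euler_bounded (\<lambda>\<rho>. \<rho> powr (s - 1 - real i' - real j') * w \<rho>) N a'"
    using b_div'[where i'="Suc i" and j'=j and c="h$1"] b_div'[where i'=i and j'="Suc j" and c="h$2"]
      times_a[where k=i and i'="i - 1" and j'=j and c="h$1", OF disj(1)]
      times_a[where k=j and i'=i and j'="j - 1" and c="h$2", OF disj(2)]
    by auto
  moreover have "(radial_monomial (a, i, j, v) has_derivative (\<lambda>h. radial_sum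
     [(\<lambda>\<rho>. h$1 * (b \<rho> / \<rho>), Suc i, j, v), (\<lambda>\<rho>. h$2 * (b \<rho> / \<rho>), i, Suc j, v),
      (\<lambda>\<rho>. h$1 * (real i * a \<rho>), i - 1, j, v), (\<lambda>\<rho>. h$2 * (real j * a \<rho>), i, j - 1, v)] x)) (at x)"
    if "x \<noteq> 0" for x
    using b that by (intro has_derivative_radial_monomial) auto
  ultimately show ?thesis by (intro exI[of _ ?ts]) auto
qed

lemma radial_sum_derivative:
  assumes "\<forall>(a, i, j, v) \<in> set ts. euler_bounded (\<lambda>\<rho>. \<rho> powr (s - real i - real j) * w \<rho>) (Suc N) a"
  shows "\<exists>ts'. (\<forall>(a, i, j, v) \<in> set ts'. euler_bounded (\<lambda>\<rho>. \<rho> powr (s - 1 - real i - real j) * w \<rho>) N a) \<and>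
    (\<forall>x. x \<noteq> 0 \<longrightarrow> (\<exists>D. (radial_sum ts has_derivative D) (at x) \<and> D h = radial_sum ts' x))"
  using assms
proof (induction ts)
  case Nil
  show ?case by (intro exI[of _ "[]"]) (auto simp: radial_sum_def intro!: exI[of _ "\<lambda>_. 0"])
next
  case (Cons t ts)
  obtain a i j v where t: "t = (a, i, j, v)" by (cases t) auto
  obtain ts1 where ts1: "\<forall>(a, i, j, v) \<in> set ts1. euler_bounded (\<lambda>\<rho>. \<rho> powr (s - 1 - real i - real j) * w \<rho>) N a"
    "\<forall>x. x \<noteq> 0 \<longrightarrow> (\<exists>D. (radial_monomial (a, i, j, v) has_derivative D) (at x) \<and> D h = radial_sum ts1 x)"
    using radial_monomial_derivative[of s i j w N a v h] Cons.prems t by auto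
  obtain ts2 where ts2: "\<forall>(a, i, j, v) \<in> set ts2. euler_bounded (\<lambda>\<rho>. \<rho> powr (s - 1 - real i - real j) * w \<rho>) N a"
    "\<forall>x. x \<noteq> 0 \<longrightarrow> (\<exists>D. (radial_sum ts has_derivative D) (at x) \<and> D h = radial_sum ts2 x)"
    using Cons by auto
  have "\<exists>D. (radial_sum (t # ts) has_derivative D) (at x) \<and> D h = radial_sum (ts1 @ ts2) x"
    if x: "x \<noteq> 0" for x
  proof -
    obtain D1 D2 where "(radial_monomial t has_derivative D1) (at x)" "D1 h = radial_sum ts1 x"
      "(radial_sum ts has_derivative D2) (at x)" "D2 h = radial_sum ts2 x"
      using ts1(2) ts2(2) x t by blast
    moreover have "radial_sum (t # ts) = (\<lambda>x. radial_monomial t x + radial_sum ts x)" by auto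
    ultimately have "(radial_sum (t # ts) has_derivative (\<lambda>h. D1 h + D2 h)) (at x)"
      "D1 h + D2 h = radial_sum (ts1 @ ts2) x"
      using has_derivative_add by auto
    thus ?thesis by blast
  qed
  moreover have "\<forall>(a, i, j, v) \<in> set (ts1 @ ts2).
      euler_bounded (\<lambda>\<rho>. \<rho> powr (s - 1 - real i - real j) * w \<rho>) N a"
    using ts1(1) ts2(1) by auto
  ultimately show ?case by blast
qed

lemma symbol_field_derivative:
  assumes "symbol_field w (Suc N) s F"
  shows "x \<noteq> 0 \<Longrightarrow> F differentiable (at x)"
    and "symbol_field w N (s - 1) (\<lambda>x. frechet_derivative F (at x) h)"
proof -
  obtain ts where ts: "\<forall>(a, i, j, v) \<in> set ts. euler_bounded (\<lambda>\<rho>. \<rho> powr (s - real i - real j) * w \<rho>) (Suc N) a"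
    "\<forall>x. x \<noteq> 0 \<longrightarrow> F x = radial_sum ts x" using assms unfolding symbol_field_def by blast
  obtain ts' where ts': "\<forall>(a, i, j, v) \<in> set ts'. euler_bounded (\<lambda>\<rho>. \<rho> powr (s - 1 - real i - real j) * w \<rho>) N a"
    "\<forall>x. x \<noteq> 0 \<longrightarrow> (\<exists>D. (radial_sum ts has_derivative D) (at x) \<and> D h = radial_sum ts' x)"
    using radial_sum_derivative[OF ts(1)] by blast
  have F_deriv: "\<exists>D. (F has_derivative D) (at x) \<and> D h = radial_sum ts' x" if x: "x \<noteq> 0" for x
  proof -
    obtain D where D: "(radial_sum ts has_derivative D) (at x)" "D h = radial_sum ts' x"
      using ts'(2) x by blast
    have "(F has_derivative D) (at x)"
      by (rule has_derivative_transform_within_open[OF D(1), of "- {0}"]) (use x ts(2) in auto)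
    thus ?thesis using D(2) by blast
  qed
  show "x \<noteq> 0 \<Longrightarrow> F differentiable (at x)" using F_deriv differentiableI by blast
  have "frechet_derivative F (at x) h = radial_sum ts' x" if "x \<noteq> 0" for x
    using F_deriv[OF that] frechet_derivative_at by metis
  thus "symbol_field w N (s - 1) (\<lambda>x. frechet_derivative F (at x) h)"
    unfolding symbol_field_def using ts'(1) by (intro exI[of _ ts']) (auto simp: algebra_simps)
qed

lemma symbol_field_pd:
  assumes "symbol_field w N s F" "length ds \<le> N"
  shows "symbol_field w (N - length ds) (s - length ds) (pd ds F)"
  using assms(2)
proof (induction ds)
  case (Cons k ds)
  hence "symbol_field w (Suc (N - length (k # ds))) (s - length ds) (pd ds F)"
    by (simp add: Suc_diff_Suc)
  from symbol_field_derivative(2)[OF this, of "axis k 1"] show ?case by (simp add: algebra_simps)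
qed (use assms(1) in simp)

lemma norm_radial_monomial_le:
  assumes "\<forall>\<rho>>0. \<bar>a \<rho>\<bar> \<le> C * (\<rho> powr (s - real i - real j) * w \<rho>)" "x \<noteq> 0"
  shows "norm (radial_monomial (a, i, j, v) x) \<le> (C * norm v) * norm x powr s * w (norm x)"
proof -
  define \<rho> where "\<rho> = norm x"
  have \<rho>: "\<rho> > 0" using assms(2) by (simp add: \<rho>_def)
  have coords: "\<bar>x$1\<bar>^i \<le> \<rho>^i" "\<bar>x$2\<bar>^j \<le> \<rho>^j"
    unfolding \<rho>_def by (intro power_mono component_le_norm_cart abs_ge_zero)+
  have "norm (radial_monomial (a, i, j, v) x) = \<bar>a \<rho>\<bar> * (\<bar>x$1\<bar>^i * \<bar>x$2\<bar>^j) * norm v"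
    by (simp add: radial_monomial_def \<rho>_def abs_mult power_abs mult_ac)
  also have "\<dots> \<le> (C * (\<rho> powr (s - real i - real j) * w \<rho>)) * (\<rho>^i * \<rho>^j) * norm v"
    using assms(1) coords \<rho> by (intro mult_right_mono mult_mono) auto
  also have "\<rho> powr (s - real i - real j) * (\<rho>^i * \<rho>^j) = \<rho> powr s"
    using \<rho> by (simp add: powr_realpow[symmetric] powr_add[symmetric])
  hence "(C * (\<rho> powr (s - real i - real j) * w \<rho>)) * (\<rho>^i * \<rho>^j) * norm v = (C * norm v) * \<rho> powr s * w \<rho>"
    by (metis (no_types, lifting) mult.assoc mult.commute)
  finally show ?thesis unfolding \<rho>_def .
qed

lemma symbol_field_bound:
  assumes "symbol_field w N s F"
  shows "\<exists>C. \<forall>x. x \<noteq> 0 \<longrightarrow> norm (F x) \<le> C * norm x powr s * w (norm x)"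
proof -
  obtain ts where ts: "\<forall>(a, i, j, v) \<in> set ts. euler_bounded (\<lambda>\<rho>. \<rho> powr (s - real i - real j) * w \<rho>) N a"
    "\<forall>x. x \<noteq> 0 \<longrightarrow> F x = radial_sum ts x" using assms unfolding symbol_field_def by blast
  have "\<exists>C. \<forall>x. x \<noteq> 0 \<longrightarrow> norm (radial_sum ts x) \<le> C * norm x powr s * w (norm x)"
    using ts(1)
  proof (induction ts)
    case (Cons t ts)
    obtain a i j v where t: "t = (a, i, j, v)" by (cases t) auto
    obtain C1 where "\<forall>\<rho>>0. \<bar>a \<rho>\<bar> \<le> C1 * (\<rho> powr (s - real i - real j) * w \<rho>)"
      using euler_bounded_0D Cons.prems t by fastforce
    hence C1: "norm (radial_monomial t x) \<le> (C1 * norm v) * norm x powr s * w (norm x)" if "x \<noteq> 0" for x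
      using norm_radial_monomial_le that t by blast
    obtain C2 where C2: "\<forall>x. x \<noteq> 0 \<longrightarrow> norm (radial_sum ts x) \<le> C2 * norm x powr s * w (norm x)"
      using Cons by auto
    have "norm (radial_sum (t # ts) x) \<le> (C1 * norm v + C2) * norm x powr s * w (norm x)"
      if "x \<noteq> 0" for x
      using norm_triangle_le[OF add_mono[OF C1[OF that] C2[rule_format, OF that]]]
      by (simp add: distrib_right)
    thus ?case by blast
  qed (auto intro: exI[of _ 0])
  thus ?thesis using ts(2) by auto
qed

lemma symbol_field_pd_differentiable:
  assumes "symbol_field w N s F" "length ds < N" "x \<noteq> 0"
  shows "pd ds F differentiable (at x)"
proof -
  have "symbol_field w (Suc (N - Suc (length ds))) (s - length ds) (pd ds F)"
    using symbol_field_pd[OF assms(1)] assms(2) by (simp add: Suc_diff_Suc)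
  thus ?thesis using symbol_field_derivative(1) assms(3) by blast
qed

lemma symbol_field_pd_bounds:
  assumes "symbol_field w N s F" "\<And>\<rho>. \<rho> > 0 \<Longrightarrow> w \<rho> \<ge> 0"
  shows "\<exists>C>0. \<forall>ds x. length ds \<le> N \<longrightarrow> x \<noteq> 0 \<longrightarrow>
    norm (pd ds F x) \<le> C * norm x powr (s - length ds) * w (norm x)"
proof -
  let ?D = "{ds :: 2 list. length ds \<le> N}"
  have "\<forall>ds\<in>?D. \<exists>C. \<forall>x. x \<noteq> 0 \<longrightarrow> norm (pd ds F x) \<le> C * norm x powr (s - length ds) * w (norm x)"
    using symbol_field_bound[OF symbol_field_pd[OF assms(1)]] by blast
  then obtain C where C: "\<And>ds x. ds \<in> ?D \<Longrightarrow> x \<noteq> 0 \<Longrightarrow>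
      norm (pd ds F x) \<le> C ds * norm x powr (s - length ds) * w (norm x)"
    by metis
  have finite: "finite ?D" using finite_lists_length_le[of "UNIV :: 2 set" N] by simp
  define K where "K = 1 + (\<Sum>ds\<in>?D. \<bar>C ds\<bar>)"
  have "K > 0" unfolding K_def by (simp add: add_pos_nonneg sum_nonneg)
  moreover have "norm (pd ds F x) \<le> K * norm x powr (s - length ds) * w (norm x)"
    if ds: "length ds \<le> N" and x: "x \<noteq> 0" for ds x
  proof -
    have "C ds \<le> K"
      using member_le_sum[OF _ _ finite, of ds "\<lambda>ds. \<bar>C ds\<bar>"] ds by (simp add: K_def)
    hence "C ds * norm x powr (s - length ds) \<le> K * norm x powr (s - length ds)"
      by (rule mult_right_mono) simp
    hence "C ds * norm x powr (s - length ds) * w (norm x) \<le> K * norm x powr (s - length ds) * w (norm x)"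
      by (rule mult_right_mono) (use assms(2) x in simp)
    moreover have "ds \<in> ?D" using ds by simp
    ultimately show ?thesis using order_trans[OF C[of ds x]] x by blast
  qed
  ultimately show ?thesis by blast
qed

lemma euler_bounded_Gfun:
  assumes "tame_profile m (deriv m) m0 A B" "euler_bounded (deriv m) (Suc N) (deriv m)"
  shows "euler_bounded (\<lambda>\<rho>. m (1 / \<rho>) + 1) N (Gfun m)"
proof -
  interpret tame_profile m "deriv m" m0 A B by fact
  have "euler_bounded (\<lambda>\<rho>. m (1 / \<rho>) + 1) N
      (\<lambda>\<rho>. m0plus m / (2 * pi) + 1 / (2 * pi) * bessel_transform (deriv m) \<rho>)"
    using m_pos by (intro euler_bounded_add euler_bounded_const euler_bounded_cmult
        euler_bounded_bessel_transform assms(2)) (simp add: less_imp_le)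
  thus ?thesis
  proof (rule euler_bounded_cong)
    fix \<rho> :: real assume "\<rho> > 0"
    hence "bessel_transform (deriv m) \<rho> = integral {0<..} (\<lambda>r. bessel_J0 (\<rho> * r) * deriv m r)"
      unfolding bessel_transform_def
      by (intro set_borel_integral_eq_integral(2) set_integrable_bessel_J0_times[OF assms(2)])
    thus "m0plus m / (2 * pi) + 1 / (2 * pi) * bessel_transform (deriv m) \<rho> = Gfun m \<rho>"
      by (simp add: Gfun_def)
  qed simp
qed

lemma symbol_field_Kker:
  assumes "euler_bounded w N (Gfun m)"
  shows "symbol_field w N (-1) (Kker m)"
proof -
  let ?a = "\<lambda>\<rho>. Gfun m \<rho> / \<rho>\<^sup>2"
  have "euler_bounded (\<lambda>\<rho>. \<rho> powr (-2) * w \<rho>) N ?a"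
    using euler_bounded_mult_powr[OF assms, of "-2"]
    by (rule euler_bounded_cong) (simp_all add: powr_minus powr_numeral divide_inverse mult.commute)
  moreover have "Kker m x = radial_sum [(?a, 0, 1, axis 1 1), (?a, 1, 0, - axis 2 1)] x" for x
  proof -
    have "Kker m x $ k = radial_sum [(?a, 0, 1, axis 1 1), (?a, 1, 0, - axis 2 1)] x $ k" for k
      using exhaust_2[of k] by (auto simp: Kker_def perp_def radial_monomial_def axis_def)
    thus ?thesis by (simp add: vec_eq_iff)
  qed
  ultimately show ?thesis unfolding symbol_field_def
    by (intro exI[of _ "[(?a, 0, 1, axis 1 1), (?a, 1, 0, - axis 2 1)]"]) auto
qed

theorem corollary2p4:
  fixes m :: "real \<Rightarrow> real" and n :: nat
  assumes "n \<ge> 1" and "H1 n m" and "H2a m"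
  shows "\<exists>C>0. \<forall>x::real^2. x \<noteq> 0 \<longrightarrow>
           (\<forall>ds. length ds \<le> n \<longrightarrow> pd ds (Kker m) differentiable (at x)) \<and>
           (\<forall>ds. length ds \<le> n + 1 \<longrightarrow>
              norm (pd ds (Kker m) x)
                \<le> C * norm x powr (- real (length ds + 1)) * (m (1 / norm x) + 1))"
proof -
  obtain m0 A B where tame: "tame_profile m (deriv m) m0 A B"
    using tame_profile_if_H1_H2a[OF assms(2,3)] by blast
  have "euler_bounded (deriv m) (Suc (n + 1)) (deriv m)"
    by (rule euler_bounded_mono[OF _ euler_bounded_deriv_if_H1[OF assms(2)]]) simp
  hence K: "symbol_field (\<lambda>\<rho>. m (1 / \<rho>) + 1) (n + 1) (-1) (Kker m)"
    by (intro symbol_field_Kker euler_bounded_Gfun[OF tame])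
  have "0 \<le> m (1 / \<rho>) + 1" if "\<rho> > 0" for \<rho>
    using tame_profile.m_pos[OF tame, of "1 / \<rho>"] that by simp
  then obtain C where "C > 0" and C: "\<And>ds x. length ds \<le> n + 1 \<Longrightarrow> x \<noteq> 0 \<Longrightarrow>
      norm (pd ds (Kker m) x) \<le> C * norm x powr (-1 - real (length ds)) * (m (1 / norm x) + 1)"
    using symbol_field_pd_bounds[OF K] by blast
  have "- real (length ds + 1) = -1 - real (length ds)" for ds :: "2 list" by simp
  thus ?thesis
    using symbol_field_pd_differentiable[OF K] C \<open>C > 0\<close> by (intro exI[of _ C]) auto
qed

end
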